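(* Fix $c>0$ and an integer $K\ge1$, and let $p_n=c/n$. For the Tetris exploration algorithm on $n$ vertices (described in the context), let $A_k(t)=|\mathcal{A}_k(t)|$ and $\alpha^n_k(t)=A_k(\lfloor nt\rfloor)/n$ for $t\in[0,1]$, $1\le k\le K$, and $\boldsymbol\alpha^n(t)=(\alpha_1^n(t),\dots,\alpha^n_K(t))$. For $\boldsymbol\alpha=(\alpha_1,\dots,\alpha_K)$ define $$\delta_1(\boldsymbol\alpha)=e^{-c(\alpha_1+\dots+\alpha_K)},\qquad \delta_k(\boldsymbol\alpha)=\big(1-e^{-c\alpha_{k-1}}\big)e^{-c(\alpha_k+\dots+\alpha_K)}\ \ (2\le k\le K).$$ Then the integral equations $\alpha_k(t)=\int_0^t\delta_k(\boldsymbol\alpha(s))\,ds$, $1\le k\le K$, $t\in[0,1]$, have a unique solution $\boldsymbol\alpha(t)$, and the process $\{\boldsymbol\alpha^n(t)\}_{0\le t\le1}$ converges in distribution (uniformly on $[0,1]$) to the deterministic process $\{\boldsymbol\alpha(t)\}_{0\le t\le1}$. Consequently, if $N_k(n)$ denotes the number of vertices at height $k$ in the final state of the Tetris model on $G(n,c/n)$, then for all $1\le k\le K$, $N_k(n)/n\to\alpha_k(1)$ in distribution as $n\to\infty$.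
   Context: $G(n,p_n)$ is the Erdős–Rényi random graph on $[n]$ with independent edge probability $p_n$. Tetris model: given $G(n,p_n)$, set $h_v(0)=0$ for all $v$. At step $t+1$ a vertex $u$ is chosen uniformly at random among vertices not selected before; with $m$ the maximum of $h_w(t)$ over neighbours $w$ of $u$ ($m=0$ if none), set $h_u(t+1)=m+1$ if $m<K$ and $h_u(t+1)=0$ otherwise. After $n$ steps, $N_k(n)=|\{v:h_v(n)=k\}|$. Tetris exploration algorithm: maintain $\mathcal{A}_k(t)$, $0\le k\le K$ (explored vertices at height $k$; height $0$ = frozen) and unexplored set $\mathcal{U}(t)$, initially empty and $[n]$ respectively. At step $t+1$, select $v\in\mathcal{U}(t)$ uniformly, remove it from $\mathcal{U}$, join it to each explored vertex independently with probability $p_n$; if $j$ is the maximal height among explored vertices joined to $v$ ($j=0$ if none) and $j\le K-1$, then $v$ joins $\mathcal{A}_{j+1}$, otherwise $v$ joins $\mathcal{A}_0$. Convergence in distribution of processes is understood as uniform convergence over compact sets. *)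

theory Defs
  imports "HOL-Probability.Probability" "HOL-Combinatorics.Multiset_Permutations"
begin

text \<open>A state records, for every vertex v < n, either None (v is unexplored, i.e. in U(t))
  or Some k (v is explored and lies in A_k(t); k = 0 means frozen).\<close>

type_synonym expl_state = "nat \<Rightarrow> nat option"

definition expl_init :: expl_state where
  "expl_init = (\<lambda>_. None)"

definition unexplored :: "nat \<Rightarrow> expl_state \<Rightarrow> nat set" where
  "unexplored n h = {v. v < n \<and> h v = None}"

definition explored :: "nat \<Rightarrow> expl_state \<Rightarrow> nat set" where
  "explored n h = {v. v < n \<and> h v \<noteq> None}"

definition expl_step :: "nat \<Rightarrow> real \<Rightarrow> nat \<Rightarrow> expl_state \<Rightarrow> expl_state pmf" where
  "expl_step n p K h =
     (if unexplored n h = {} then return_pmf h else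
      do { v \<leftarrow> pmf_of_set (unexplored n h);
           J \<leftarrow> Pi_pmf (explored n h) False (\<lambda>_. bernoulli_pmf p);
           let j = Max (insert 0 {k. \<exists>w\<in>explored n h. J w \<and> h w = Some k});
           return_pmf (h(v := Some (if j \<le> K - 1 then j + 1 else 0))) })"

fun expl_traj :: "nat \<Rightarrow> real \<Rightarrow> nat \<Rightarrow> nat \<Rightarrow> expl_state list pmf" where
  "expl_traj n p K 0 = return_pmf [expl_init]"
| "expl_traj n p K (Suc t) =
     do { xs \<leftarrow> expl_traj n p K t; h \<leftarrow> expl_step n p K (last xs); return_pmf (xs @ [h]) }"

definition A_count :: "nat \<Rightarrow> expl_state \<Rightarrow> nat \<Rightarrow> nat" where
  "A_count n h k = card {v. v < n \<and> h v = Some k}"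

definition alpha_n :: "nat \<Rightarrow> expl_state list \<Rightarrow> real \<Rightarrow> nat \<Rightarrow> real" where
  "alpha_n n xs t k = real (A_count n (xs ! nat \<lfloor>real n * t\<rfloor>) k) / real n"

definition delta :: "real \<Rightarrow> nat \<Rightarrow> (nat \<Rightarrow> real) \<Rightarrow> nat \<Rightarrow> real" where
  "delta c K a k =
     (if k = 1 then exp (- c * (\<Sum>i=1..K. a i))
      else (1 - exp (- c * a (k - 1))) * exp (- c * (\<Sum>i=k..K. a i)))"

definition solves_tetris_ode :: "real \<Rightarrow> nat \<Rightarrow> (real \<Rightarrow> nat \<Rightarrow> real) \<Rightarrow> bool" where
  "solves_tetris_ode c K \<alpha> \<longleftrightarrow>
     (\<forall>t\<in>{0..1}. \<forall>k\<in>{1..K}. ((\<lambda>s. delta c K (\<alpha> s) k) has_integral \<alpha> t k) {0..t})"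

definition gnp :: "nat \<Rightarrow> real \<Rightarrow> (nat \<times> nat \<Rightarrow> bool) pmf" where
  "gnp n p = Pi_pmf {(i, j). i < j \<and> j < n} False (\<lambda>_. bernoulli_pmf p)"

definition adj :: "(nat \<times> nat \<Rightarrow> bool) \<Rightarrow> nat \<Rightarrow> nat \<Rightarrow> bool" where
  "adj E u w \<longleftrightarrow> u \<noteq> w \<and> E (min u w, max u w)"

definition tetris_update :: "nat \<Rightarrow> nat \<Rightarrow> (nat \<times> nat \<Rightarrow> bool) \<Rightarrow> (nat \<Rightarrow> nat) \<Rightarrow> nat \<Rightarrow> (nat \<Rightarrow> nat)" where
  "tetris_update n K E h u =
     (let m = Max (insert 0 {h w | w. w < n \<and> adj E u w})
      in h(u := (if m < K then m + 1 else 0)))"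

definition tetris_final :: "nat \<Rightarrow> nat \<Rightarrow> (nat \<times> nat \<Rightarrow> bool) \<Rightarrow> nat list \<Rightarrow> (nat \<Rightarrow> nat)" where
  "tetris_final n K E vs = foldl (tetris_update n K E) (\<lambda>_. 0) vs"

definition tetris_pmf :: "nat \<Rightarrow> real \<Rightarrow> nat \<Rightarrow> (nat \<Rightarrow> nat) pmf" where
  "tetris_pmf n p K =
     do { E \<leftarrow> gnp n p; ord \<leftarrow> pmf_of_set (permutations_of_set {0..<n});
          return_pmf (tetris_final n K E ord) }"

definition N_count :: "nat \<Rightarrow> (nat \<Rightarrow> nat) \<Rightarrow> nat \<Rightarrow> nat" where
  "N_count n h k = card {v. v < n \<and> h v = k}"

end

theory Submission
  imports Defs
begin

(* The right-hand side of the integral equations is 2c-Lipschitz in the l1 norm on nonnegative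
   paths, so Picard iteration converges and the usual (L t)^m / m! estimate gives uniqueness.

   In the exploration each count A_k(t) grows by 0 or 1 per step, and its conditional mean
   increment is the probability that the new vertex gets height k, namely
   (1 - c/n)^(#explored above k-1) - (1 - c/n)^(#explored above k-2), which is
   delta_k(A(t)/n) + O(1/n).  Subtracting the accumulated drift leaves a martingale with
   variance at most t; Chebyshev at G grid times together with its 1-Lipschitz paths keeps all
   these martingales below zeta n with probability 1 - O(1/n), and on that event a discrete
   Gronwall inequality keeps A(floor (n t))/n within O(zeta) + O(1/n) of alpha(t).

   The Tetris model on G(n, c/n) with a uniform random order has the law of the final state of
   the exploration: the edges from the vertex being processed to already processed vertices are
   revealed only at that moment and decide its height exactly as in the exploration.  Finally,
   convergence in probability to the constant alpha_k(1) gives weak convergence. *)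

section \<open>The limiting integral equations\<close>

definition l1_dist :: "nat \<Rightarrow> (nat \<Rightarrow> real) \<Rightarrow> (nat \<Rightarrow> real) \<Rightarrow> real" where
  "l1_dist K a b = (\<Sum>i=1..K. \<bar>a i - b i\<bar>)"

lemma l1_dist_nonneg: "0 \<le> l1_dist K a b"
  unfolding l1_dist_def by (intro sum_nonneg) auto

lemma abs_diff_le_l1_dist: "i \<in> {1..K} \<Longrightarrow> \<bar>a i - b i\<bar> \<le> l1_dist K a b"
  unfolding l1_dist_def by (intro member_le_sum) auto

lemma abs_sum_diff_le_l1_dist:
  assumes "j \<ge> 1"
  shows "\<bar>(\<Sum>i=j..K. a i) - (\<Sum>i=j..K. b i)\<bar> \<le> l1_dist K a b"
proof -
  have "\<bar>(\<Sum>i=j..K. a i) - (\<Sum>i=j..K. b i)\<bar> \<le> (\<Sum>i=j..K. \<bar>a i - b i\<bar>)"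
    by (metis sum_abs sum_subtractf)
  also have "\<dots> \<le> l1_dist K a b"
    unfolding l1_dist_def using assms by (intro sum_mono2) auto
  finally show ?thesis .
qed

lemma exp_neg_lipschitz:
  fixes c x y :: real
  assumes "c \<ge> 0" "x \<ge> 0" "y \<ge> 0"
  shows "\<bar>exp (- c * x) - exp (- c * y)\<bar> \<le> c * \<bar>x - y\<bar>"
proof -
  have ordered: "0 \<le> exp (- c * x) - exp (- c * y) \<and> exp (- c * x) - exp (- c * y) \<le> c * (y - x)"
    if "0 \<le> x" "x \<le> y" for x y :: real
  proof
    show "0 \<le> exp (- c * x) - exp (- c * y)"
      using that assms by (simp add: mult_left_mono)
    have "exp (- c * x) - exp (- c * y) = exp (- c * x) * (1 - exp (- (c * (y - x))))"
      by (simp add: algebra_simps flip: exp_add)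
    also have "\<dots> \<le> 1 * (c * (y - x))"
    proof (rule mult_mono)
      show "1 - exp (- (c * (y - x))) \<le> c * (y - x)"
        using exp_ge_add_one_self[of "- (c * (y - x))"] by linarith
    qed (use that assms in auto)
    finally show "exp (- c * x) - exp (- c * y) \<le> c * (y - x)" by simp
  qed
  show ?thesis
    using ordered[of x y] ordered[of y x] assms by (cases "x \<le> y") auto
qed

lemma delta_eq_diff_exp:
  assumes "k \<in> {2..K}"
  shows "delta c K a k = exp (- c * (\<Sum>i=k..K. a i)) - exp (- c * (\<Sum>i=k-1..K. a i))"
proof -
  have "(\<Sum>i=k-1..K. a i) = a (k - 1) + (\<Sum>i=k..K. a i)"
    using assms by (subst sum.atLeast_Suc_atMost) (auto simp: Suc_diff_le)
  then show ?thesis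
    using assms by (auto simp: delta_def algebra_simps simp flip: exp_add)
qed

lemma delta_nonneg:
  assumes "c > 0" and "\<And>i. i \<in> {1..K} \<Longrightarrow> a i \<ge> 0" and "k \<in> {1..K}"
  shows "0 \<le> delta c K a k"
proof (cases "k = 1")
  case False
  then have "k - 1 \<in> {1..K}" using assms(3) by auto
  then have "a (k - 1) \<ge> 0" using assms(2) by blast
  then show ?thesis using assms(1) False by (simp add: delta_def)
qed (simp add: delta_def)

lemma delta_le_one:
  assumes "c > 0" and "\<And>i. i \<in> {1..K} \<Longrightarrow> a i \<ge> 0" and "k \<in> {1..K}"
  shows "delta c K a k \<le> 1"
proof -
  have "(\<Sum>i=k..K. a i) \<ge> 0" using assms by (intro sum_nonneg) auto
  then have "exp (- c * (\<Sum>i=k..K. a i)) \<le> 1" using assms(1) by simp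
  moreover have "0 \<le> 1 - exp (- c * a (k - 1)) \<and> 1 - exp (- c * a (k - 1)) \<le> 1"
    if "k \<noteq> 1"
  proof -
    have "k - 1 \<in> {1..K}" using that assms(3) by auto
    then show ?thesis using assms(1,2) by simp
  qed
  ultimately show ?thesis
    by (auto simp: delta_def intro: mult_le_one)
qed

lemma delta_lipschitz:
  assumes c: "c > 0" and a: "\<And>i. i \<in> {1..K} \<Longrightarrow> a i \<ge> 0"
    and b: "\<And>i. i \<in> {1..K} \<Longrightarrow> b i \<ge> 0" and k: "k \<in> {1..K}"
  shows "\<bar>delta c K a k - delta c K b k\<bar> \<le> 2 * c * l1_dist K a b"
proof -
  have exp_tail: "\<bar>exp (- c * (\<Sum>i=j..K. a i)) - exp (- c * (\<Sum>i=j..K. b i))\<bar> \<le> c * l1_dist K a b"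
    if "j \<ge> 1" for j
  proof -
    have "(\<Sum>i=j..K. a i) \<ge> 0" "(\<Sum>i=j..K. b i) \<ge> 0"
      using a b that by (auto intro!: sum_nonneg)
    then show ?thesis
      using exp_neg_lipschitz[of c] abs_sum_diff_le_l1_dist[OF that, where K = K and a = a and b = b] c
      by (meson less_imp_le mult_left_mono order_trans)
  qed
  show ?thesis
  proof (cases "k = 1")
    case True
    then show ?thesis
      using exp_tail[of 1] l1_dist_nonneg[of K a b] c by (simp add: delta_def)
  next
    case False
    then have k2: "k \<in> {2..K}" using k by auto
    then have "k - 1 \<ge> 1" by auto
    with exp_tail[of k] exp_tail[of "k - 1"] k2 show ?thesis
      unfolding delta_eq_diff_exp[OF k2] abs_le_iff by auto
  qed
qed

lemma continuous_on_delta: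
  assumes "\<And>i. i \<in> {1..K} \<Longrightarrow> continuous_on S (\<lambda>s. f s i)" and "k \<in> {1..K}"
  shows "continuous_on S (\<lambda>s. delta c K (f s) k)"
proof (cases "k = 1")
  case False
  then have "k - 1 \<in> {1..K}" using assms(2) by auto
  with False show ?thesis using assms unfolding delta_def by (auto intro!: continuous_intros)
qed (use assms in \<open>auto simp: delta_def intro!: continuous_intros\<close>)

lemma unit_bounded_primitive:
  fixes g F :: "real \<Rightarrow> real"
  assumes g01: "\<And>s. s \<in> {0..1} \<Longrightarrow> 0 \<le> g s \<and> g s \<le> 1"
    and prim: "\<And>t. t \<in> {0..1} \<Longrightarrow> (g has_integral F t) {0..t}"
  shows "\<And>t. t \<in> {0..1} \<Longrightarrow> 0 \<le> F t \<and> F t \<le> t"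
    and "1-lipschitz_on {0..1} F"
proof -
  have incr: "0 \<le> F t - F s \<and> F t - F s \<le> t - s" if st: "s \<in> {0..1}" "t \<in> {0..1}" "s \<le> t" for s t
  proof -
    have it: "g integrable_on {0..t}" using prim[OF st(2)] by blast
    then have ist: "g integrable_on {s..t}"
      using st by (intro integrable_subinterval_real[OF it]) auto
    have "integral {0..s} g + integral {s..t} g = integral {0..t} g"
      using st it by (intro Henstock_Kurzweil_Integration.integral_combine) auto
    then have "F t - F s = integral {s..t} g"
      using prim[OF st(1)] prim[OF st(2)] by (simp add: integral_unique)
    moreover have "integral {s..t} g \<le> integral {s..t} (\<lambda>_. 1::real)"
      using st g01 by (intro integral_le ist) auto
    moreover have "0 \<le> integral {s..t} g"
      using st g01 by (intro integral_nonneg ist) auto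
    ultimately show ?thesis using st by simp
  qed
  have "(g has_integral F 0) {0}" using prim[of 0] by simp
  then have "F 0 = 0" using has_integral_unique has_integral_refl(2) by (metis box_real(2))
  then show "0 \<le> F t \<and> F t \<le> t" if "t \<in> {0..1}" for t
    using incr[of 0 t] that by auto
  show "1-lipschitz_on {0..1} F"
  proof (rule lipschitz_onI)
    fix x y :: real assume "x \<in> {0..1}" "y \<in> {0..1}"
    then show "dist (F x) (F y) \<le> 1 * dist x y"
      using incr[of x y] incr[of y x] by (cases "x \<le> y") (auto simp: dist_real_def)
  qed simp
qed

lemma has_integral_power:
  assumes "(t::real) \<ge> 0"
  shows "((\<lambda>s. s ^ m) has_integral t ^ Suc m / Suc m) {0..t}"
proof -
  have "((\<lambda>x. x ^ Suc m / Suc m) has_real_derivative x ^ m) (at x)" for x :: real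
    using DERIV_cdivide[OF DERIV_pow[of "Suc m" x], of "Suc m"] by (simp del: of_nat_Suc)
  then have "((\<lambda>s. s ^ m) has_integral (t ^ Suc m / Suc m - 0 ^ Suc m / Suc m)) {0..t}"
    using assms by (intro fundamental_theorem_of_calculus)
      (auto simp: has_real_derivative_iff_has_vector_derivative[symmetric] has_field_derivative_at_within)
  then show ?thesis by simp
qed

text \<open>The contraction estimate behind both the Picard iteration and uniqueness: if two
  nonnegative continuous paths are within \<open>B (L s)\<^sup>m / m!\<close> in \<open>\<ell>\<^sup>1\<close>, with \<open>L = 2 c K\<close>, then the
  right-hand sides of the integral equations are within \<open>B (L t)\<^bsup>m+1\<^esup> / (m+1)!\<close>.\<close>

lemma l1_dist_integral_delta_le:
  fixes f g F G :: "real \<Rightarrow> nat \<Rightarrow> real"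
  assumes c: "c > 0"
    and fnn: "\<And>s i. s \<in> {0..1} \<Longrightarrow> i \<in> {1..K} \<Longrightarrow> f s i \<ge> 0"
    and gnn: "\<And>s i. s \<in> {0..1} \<Longrightarrow> i \<in> {1..K} \<Longrightarrow> g s i \<ge> 0"
    and fc: "\<And>i. i \<in> {1..K} \<Longrightarrow> continuous_on {0..1} (\<lambda>s. f s i)"
    and gc: "\<And>i. i \<in> {1..K} \<Longrightarrow> continuous_on {0..1} (\<lambda>s. g s i)"
    and F: "\<And>t k. t \<in> {0..1} \<Longrightarrow> k \<in> {1..K} \<Longrightarrow> F t k = integral {0..t} (\<lambda>s. delta c K (f s) k)"
    and G: "\<And>t k. t \<in> {0..1} \<Longrightarrow> k \<in> {1..K} \<Longrightarrow> G t k = integral {0..t} (\<lambda>s. delta c K (g s) k)"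
    and close: "\<And>s. s \<in> {0..1} \<Longrightarrow> l1_dist K (f s) (g s) \<le> B * (2 * c * K * s) ^ m / fact m"
    and t: "t \<in> {0..1}"
  shows "l1_dist K (F t) (G t) \<le> B * (2 * c * K * t) ^ Suc m / fact (Suc m)"
proof -
  define L where "L = 2 * c * K"
  define w where "w s = 2 * c * B * L ^ m / fact m * s ^ m" for s :: real
  have w_int: "(w has_integral 2 * c * B * L ^ m / fact m * (t ^ Suc m / Suc m)) {0..t}"
    unfolding w_def using t by (intro has_integral_mult_right has_integral_power) auto
  have coord: "\<bar>F t k - G t k\<bar> \<le> 2 * c * B * L ^ m / fact m * (t ^ Suc m / Suc m)"
    if k: "k \<in> {1..K}" for k
  proof -
    have intf: "(\<lambda>s. delta c K (f s) k) integrable_on {0..t}"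
      using t k by (intro integrable_continuous_interval continuous_on_subset[OF continuous_on_delta[OF fc]]) auto
    have intg: "(\<lambda>s. delta c K (g s) k) integrable_on {0..t}"
      using t k by (intro integrable_continuous_interval continuous_on_subset[OF continuous_on_delta[OF gc]]) auto
    have "F t k - G t k = integral {0..t} (\<lambda>s. delta c K (f s) k - delta c K (g s) k)"
      using F[OF t k] G[OF t k] integral_diff[OF intf intg] by simp
    also have "\<bar>\<dots>\<bar> \<le> integral {0..t} w"
    proof (rule integral_norm_bound_integral[where 'a=real, unfolded real_norm_def])
      show "(\<lambda>s. delta c K (f s) k - delta c K (g s) k) integrable_on {0..t}"
        using intf intg by (rule integrable_diff)
      show "w integrable_on {0..t}"
        using w_int by blast
      fix s assume "s \<in> {0..t}"
      then have s: "s \<in> {0..1}" using t by auto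
      have "\<bar>delta c K (f s) k - delta c K (g s) k\<bar> \<le> 2 * c * l1_dist K (f s) (g s)"
        using c fnn[OF s] gnn[OF s] k by (intro delta_lipschitz) auto
      also have "\<dots> \<le> 2 * c * (B * (L * s) ^ m / fact m)"
        using mult_left_mono[OF close[OF s], of "2 * c"] c by (simp add: L_def)
      finally show "\<bar>delta c K (f s) k - delta c K (g s) k\<bar> \<le> w s"
        by (simp add: w_def power_mult_distrib)
    qed
    finally show ?thesis using w_int by (simp add: integral_unique)
  qed
  have "l1_dist K (F t) (G t) \<le> (\<Sum>k=1..K. 2 * c * B * L ^ m / fact m * (t ^ Suc m / Suc m))"
    unfolding l1_dist_def by (intro sum_mono coord) auto
  also have "\<dots> = B * (L * t) ^ Suc m / fact (Suc m)"
    by (simp add: L_def power_mult_distrib field_simps del: of_nat_Suc)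
  finally show ?thesis by (simp add: L_def)
qed

lemma power_over_fact_tendsto_0: "(\<lambda>m. B * (x::real) ^ m / fact m) \<longlonglongrightarrow> 0"
proof -
  have "(\<lambda>m. B * (inverse (fact m) * x ^ m)) \<longlonglongrightarrow> B * 0"
    using summable_LIMSEQ_zero[OF summable_exp[of x]] by (intro tendsto_intros)
  then show ?thesis by (simp add: field_simps)
qed

primrec picard :: "real \<Rightarrow> nat \<Rightarrow> nat \<Rightarrow> real \<Rightarrow> nat \<Rightarrow> real" where
  "picard c K 0 = (\<lambda>t k. 0)"
| "picard c K (Suc m) = (\<lambda>t k. integral {0..t} (\<lambda>s. delta c K (picard c K m s) k))"

lemma picard_bounds:
  assumes c: "c > 0" and i: "i \<in> {1..K}"
  shows "\<And>t. t \<in> {0..1} \<Longrightarrow> 0 \<le> picard c K m t i \<and> picard c K m t i \<le> t"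
    and "1-lipschitz_on {0..1} (\<lambda>s. picard c K m s i)"
proof -
  have "(\<forall>t\<in>{0..1}. 0 \<le> picard c K m t i \<and> picard c K m t i \<le> t) \<and>
        1-lipschitz_on {0..1} (\<lambda>s. picard c K m s i)" if i: "i \<in> {1..K}" for i
    using i
  proof (induction m arbitrary: i)
    case 0
    then show ?case by (auto intro: lipschitz_on_le[OF lipschitz_on_constant])
  next
    case (Suc m)
    let ?g = "\<lambda>s. delta c K (picard c K m s) i"
    have cont: "continuous_on {0..1} (\<lambda>s. picard c K m s j)" if "j \<in> {1..K}" for j
      using Suc.IH[OF that] lipschitz_on_continuous_on by blast
    have g01: "0 \<le> ?g s \<and> ?g s \<le> 1" if "s \<in> {0..1}" for s
      using delta_nonneg[OF c _ Suc.prems] delta_le_one[OF c _ Suc.prems] Suc.IH that by auto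
    have prim: "(?g has_integral picard c K (Suc m) t i) {0..t}" if "t \<in> {0..1}" for t
    proof -
      have "?g integrable_on {0..t}"
        using that Suc.prems
        by (intro integrable_continuous_interval continuous_on_subset[OF continuous_on_delta[OF cont]]) auto
      then show ?thesis by (simp add: integrable_integral)
    qed
    show ?case using unit_bounded_primitive[OF g01 prim] by blast
  qed
  then show "\<And>t. t \<in> {0..1} \<Longrightarrow> 0 \<le> picard c K m t i \<and> picard c K m t i \<le> t"
    and "1-lipschitz_on {0..1} (\<lambda>s. picard c K m s i)"
    using i by blast+
qed

lemma continuous_on_picard:
  "c > 0 \<Longrightarrow> i \<in> {1..K} \<Longrightarrow> continuous_on {0..1} (\<lambda>s. picard c K m s i)"
  using picard_bounds(2) lipschitz_on_continuous_on by blast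

lemma picard_step_l1_dist_le:
  assumes c: "c > 0" and t: "t \<in> {0..1}"
  shows "l1_dist K (picard c K (Suc m) t) (picard c K m t) \<le> K * (2 * c * K * t) ^ m / fact m"
  using t
proof (induction m arbitrary: t)
  case 0
  have "l1_dist K (picard c K 1 t) (picard c K 0 t) \<le> (\<Sum>i=1..K. 1)"
    unfolding l1_dist_def
  proof (intro sum_mono)
    fix i assume "i \<in> {1..K}"
    then show "\<bar>picard c K 1 t i - picard c K 0 t i\<bar> \<le> 1"
      using picard_bounds(1)[OF c \<open>i \<in> {1..K}\<close> 0, where m = 1] 0 by (simp del: picard.simps(2))
  qed
  then show ?case by simp
next
  case (Suc m)
  have nonneg: "\<And>j s i. s \<in> {0..1} \<Longrightarrow> i \<in> {1..K} \<Longrightarrow> 0 \<le> picard c K j s i"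
    using picard_bounds(1)[OF c] by blast
  show ?case
    by (rule l1_dist_integral_delta_le[OF c nonneg nonneg continuous_on_picard[OF c]
          continuous_on_picard[OF c] _ _ Suc.IH Suc.prems]) simp_all
qed

definition tetris_ode_solution :: "real \<Rightarrow> nat \<Rightarrow> real \<Rightarrow> nat \<Rightarrow> real" where
  "tetris_ode_solution c K t i = lim (\<lambda>m. picard c K m t i)"

lemma picard_tendsto:
  assumes c: "c > 0" and t: "t \<in> {0..1}" and i: "i \<in> {1..K}"
  shows "(\<lambda>m. picard c K m t i) \<longlonglongrightarrow> tetris_ode_solution c K t i"
proof -
  define L where "L = 2 * c * K"
  have bound: "norm (picard c K (Suc m) t i - picard c K m t i) \<le> K * L ^ m / fact m" for m
  proof -
    have "norm (picard c K (Suc m) t i - picard c K m t i) \<le> K * (L * t) ^ m / fact m"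
      using abs_diff_le_l1_dist[OF i] picard_step_l1_dist_le[OF c t]
      by (simp add: L_def) (meson order_trans)
    also have "\<dots> \<le> K * L ^ m / fact m"
      using t c by (intro divide_right_mono mult_left_mono power_mono) (auto simp: L_def mult_left_le)
    finally show ?thesis .
  qed
  have "summable (\<lambda>m. K * L ^ m / fact m)"
    using summable_mult[OF summable_exp[of L], of K] by (simp add: field_simps)
  then have "summable (\<lambda>m. picard c K (Suc m) t i - picard c K m t i)"
    using bound by (rule summable_comparison_test')
  then have "convergent (\<lambda>n. \<Sum>m<n. picard c K (Suc m) t i - picard c K m t i)"
    using summable_iff_convergent by blast
  then have "convergent (\<lambda>m. picard c K m t i)"
    using sum_lessThan_telescope[of "\<lambda>m. picard c K m t i"] by (simp del: picard.simps(2))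
  then show ?thesis
    unfolding tetris_ode_solution_def by (simp add: convergent_LIMSEQ_iff)
qed

lemma tetris_ode_solution_solves:
  assumes c: "c > 0"
  shows "solves_tetris_ode c K (tetris_ode_solution c K)"
  unfolding solves_tetris_ode_def
proof (intro ballI)
  fix t :: real and k assume t: "t \<in> {0..1}" and k: "k \<in> {1..K}"
  let ?sol = "tetris_ode_solution c K"
  have integrable: "(\<lambda>s. delta c K (picard c K m s) k) integrable_on {0..t}" for m
    using t k continuous_on_picard[OF c]
    by (intro integrable_continuous_interval continuous_on_subset[OF continuous_on_delta]) auto
  have pointwise: "(\<lambda>m. delta c K (picard c K m s) k) \<longlonglongrightarrow> delta c K (?sol s) k"
    if "s \<in> {0..t}" for s
  proof -
    have "s \<in> {0..1}" using that t by auto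
    then have "(\<lambda>m. picard c K m s i) \<longlonglongrightarrow> ?sol s i" if "i \<in> {1..K}" for i
      using picard_tendsto[OF c _ that] by blast
    moreover have "k - 1 \<in> {1..K}" if "k \<noteq> 1" using that k by auto
    ultimately show ?thesis
      unfolding delta_def using k by (cases "k = 1") (auto intro!: tendsto_intros)
  qed
  have bounded: "norm (delta c K (picard c K m s) k) \<le> 1" if "s \<in> {0..t}" for m s
    using delta_nonneg[OF c _ k] delta_le_one[OF c _ k] picard_bounds(1)[OF c] that t by force
  have lim: "(\<lambda>s. delta c K (?sol s) k) integrable_on {0..t}"
    "(\<lambda>m. picard c K (Suc m) t k) \<longlonglongrightarrow> integral {0..t} (\<lambda>s. delta c K (?sol s) k)"
    using dominated_convergence[of "\<lambda>m s. delta c K (picard c K m s) k" "{0..t}" "\<lambda>_. 1",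
        OF integrable _ bounded pointwise]
    by auto
  have "?sol t k = integral {0..t} (\<lambda>s. delta c K (?sol s) k)"
    using LIMSEQ_unique[OF LIMSEQ_Suc[OF picard_tendsto[OF c t k]] lim(2)] .
  then show "((\<lambda>s. delta c K (?sol s) k) has_integral ?sol t k) {0..t}"
    using lim(1) by (simp add: integrable_integral)
qed

lemma solution_nonneg:
  assumes c: "c > 0" and sol: "solves_tetris_ode c K \<beta>"
  shows "k \<in> {1..K} \<Longrightarrow> t \<in> {0..1} \<Longrightarrow> 0 \<le> \<beta> t k"
proof (induction k arbitrary: t rule: less_induct)
  case (less k)
  show ?case
  proof (rule has_integral_nonneg)
    show "((\<lambda>s. delta c K (\<beta> s) k) has_integral \<beta> t k) {0..t}"
      using sol less.prems unfolding solves_tetris_ode_def by blast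
    fix s assume s: "s \<in> {0..t}"
    show "0 \<le> delta c K (\<beta> s) k"
    proof (cases "k = 1")
      case False
      then have "k - 1 \<in> {1..K}" "k - 1 < k" using less.prems by auto
      then have "0 \<le> \<beta> s (k - 1)" using less.IH s less.prems by auto
      then show ?thesis using c False by (simp add: delta_def)
    qed (simp add: delta_def)
  qed
qed

lemma solution_bounds:
  assumes c: "c > 0" and sol: "solves_tetris_ode c K \<beta>" and i: "i \<in> {1..K}"
  shows "\<And>t. t \<in> {0..1} \<Longrightarrow> 0 \<le> \<beta> t i \<and> \<beta> t i \<le> t"
    and "1-lipschitz_on {0..1} (\<lambda>s. \<beta> s i)"
proof -
  have "0 \<le> delta c K (\<beta> s) i \<and> delta c K (\<beta> s) i \<le> 1" if "s \<in> {0..1}" for s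
    using delta_nonneg[OF c _ i] delta_le_one[OF c _ i] solution_nonneg[OF c sol _ that] by auto
  moreover have "((\<lambda>s. delta c K (\<beta> s) i) has_integral \<beta> t i) {0..t}" if "t \<in> {0..1}" for t
    using sol that i unfolding solves_tetris_ode_def by blast
  ultimately show "\<And>t. t \<in> {0..1} \<Longrightarrow> 0 \<le> \<beta> t i \<and> \<beta> t i \<le> t"
    and "1-lipschitz_on {0..1} (\<lambda>s. \<beta> s i)"
    using unit_bounded_primitive[of "\<lambda>s. delta c K (\<beta> s) i" "\<lambda>t. \<beta> t i"] by blast+
qed

lemma solution_unique:
  assumes c: "c > 0" and sa: "solves_tetris_ode c K \<alpha>" and sb: "solves_tetris_ode c K \<beta>"
    and t: "t \<in> {0..1}" and k: "k \<in> {1..K}"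
  shows "\<beta> t k = \<alpha> t k"
proof -
  have integral_eq: "\<gamma> t k = integral {0..t} (\<lambda>s. delta c K (\<gamma> s) k)"
    if "solves_tetris_ode c K \<gamma>" "t \<in> {0..1}" "k \<in> {1..K}" for \<gamma> t k
    using that unfolding solves_tetris_ode_def by (metis integral_unique)
  have cont: "continuous_on {0..1} (\<lambda>s. \<gamma> s i)"
    if "solves_tetris_ode c K \<gamma>" "i \<in> {1..K}" for \<gamma> i
    using solution_bounds(2)[OF c that] lipschitz_on_continuous_on by blast
  have close: "l1_dist K (\<beta> t) (\<alpha> t) \<le> K * (2 * c * K * t) ^ m / fact m" if "t \<in> {0..1}" for m t
    using that
  proof (induction m arbitrary: t)
    case 0
    have "l1_dist K (\<beta> t) (\<alpha> t) \<le> (\<Sum>i=1..K. 1)"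
      unfolding l1_dist_def
    proof (intro sum_mono)
      fix i assume "i \<in> {1..K}"
      then show "\<bar>\<beta> t i - \<alpha> t i\<bar> \<le> 1"
        using solution_bounds(1)[OF c sa _ 0] solution_bounds(1)[OF c sb _ 0] 0 by force
    qed
    then show ?case by simp
  next
    case (Suc m)
    show ?case
      using solution_nonneg[OF c sa] solution_nonneg[OF c sb] cont[OF sa] cont[OF sb]
        integral_eq[OF sa] integral_eq[OF sb]
      by (intro l1_dist_integral_delta_le[OF c _ _ _ _ _ _ Suc.IH Suc.prems]) auto
  qed
  have "l1_dist K (\<beta> t) (\<alpha> t) \<le> 0"
    using close[OF t] by (intro LIMSEQ_le_const[OF power_over_fact_tendsto_0]) auto
  then show ?thesis
    using abs_diff_le_l1_dist[OF k, where a = "\<beta> t" and b = "\<alpha> t"] by simp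
qed

lemma solution_at_0:
  "c > 0 \<Longrightarrow> solves_tetris_ode c K \<alpha> \<Longrightarrow> k \<in> {1..K} \<Longrightarrow> \<alpha> 0 k = 0"
  using solution_bounds(1)[of c K \<alpha> k 0] by simp

lemma solution_increment_approx:
  assumes c: "c > 0" and sol: "solves_tetris_ode c K \<alpha>" and k: "k \<in> {1..K}"
    and ab: "0 \<le> a" "a \<le> b" "b \<le> 1"
  shows "\<bar>\<alpha> b k - \<alpha> a k - (b - a) * delta c K (\<alpha> a) k\<bar> \<le> 2 * c * K * (b - a)\<^sup>2"
proof -
  let ?g = "\<lambda>s. delta c K (\<alpha> s) k"
  have prim: "(?g has_integral \<alpha> t k) {0..t}" if "t \<in> {0..1}" for t
    using sol that k unfolding solves_tetris_ode_def by blast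
  have ib: "?g integrable_on {0..b}" using prim[of b] ab by auto
  have iab: "?g integrable_on {a..b}"
    using ab by (intro integrable_subinterval_real[OF ib]) auto
  have "integral {0..a} ?g + integral {a..b} ?g = integral {0..b} ?g"
    using ab ib by (intro Henstock_Kurzweil_Integration.integral_combine) auto
  then have "\<alpha> b k - \<alpha> a k = integral {a..b} ?g"
    using prim[of a] prim[of b] ab by (simp add: integral_unique)
  then have "\<alpha> b k - \<alpha> a k - (b - a) * delta c K (\<alpha> a) k = integral {a..b} (\<lambda>s. ?g s - ?g a)"
    using ab by (simp add: integral_diff[OF iab integrable_const_ivl])
  also have "\<bar>\<dots>\<bar> \<le> integral {a..b} (\<lambda>_. 2 * c * K * (b - a))"
  proof (rule integral_norm_bound_integral[where 'a=real, unfolded real_norm_def])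
    show "(\<lambda>s. ?g s - ?g a) integrable_on {a..b}"
      using iab by (intro integrable_diff) auto
    fix s assume s: "s \<in> {a..b}"
    then have s1: "s \<in> {0..1}" "a \<in> {0..1}" using ab by auto
    have "\<bar>?g s - ?g a\<bar> \<le> 2 * c * l1_dist K (\<alpha> s) (\<alpha> a)"
      using solution_nonneg[OF c sol] s1 k by (intro delta_lipschitz c) auto
    also have "l1_dist K (\<alpha> s) (\<alpha> a) \<le> (\<Sum>i=1..K. b - a)"
      unfolding l1_dist_def
    proof (intro sum_mono)
      fix i assume "i \<in> {1..K}"
      then have "dist (\<alpha> s i) (\<alpha> a i) \<le> 1 * dist s a"
        using lipschitz_onD[OF solution_bounds(2)[OF c sol] s1] by blast
      then show "\<bar>\<alpha> s i - \<alpha> a i\<bar> \<le> b - a" using s by (simp add: dist_real_def)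
    qed
    finally show "\<bar>?g s - ?g a\<bar> \<le> 2 * c * K * (b - a)"
      using c by (simp add: mult.assoc)
  qed (rule integrable_const_ivl)
  also have "\<dots> = 2 * c * K * (b - a)\<^sup>2" using ab by (simp add: power2_eq_square)
  finally show ?thesis .
qed

section \<open>Trajectories of Markov chains\<close>

fun markov_traj :: "('s \<Rightarrow> 's pmf) \<Rightarrow> 's \<Rightarrow> nat \<Rightarrow> 's list pmf" where
  "markov_traj st x0 0 = return_pmf [x0]"
| "markov_traj st x0 (Suc t) =
     do { xs \<leftarrow> markov_traj st x0 t; h \<leftarrow> st (last xs); return_pmf (xs @ [h]) }"

lemma expl_traj_eq_markov_traj: "expl_traj n p K t = markov_traj (expl_step n p K) expl_init t"
  by (induction t) auto

lemma set_pmf_markov_traj: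
  assumes "xs \<in> set_pmf (markov_traj st x0 t)"
  shows "length xs = Suc t" and "xs ! 0 = x0" and "\<And>s. s < t \<Longrightarrow> xs ! Suc s \<in> set_pmf (st (xs ! s))"
proof -
  have "length xs = Suc t \<and> xs ! 0 = x0 \<and> (\<forall>s<t. xs ! Suc s \<in> set_pmf (st (xs ! s)))"
    using assms
  proof (induction t arbitrary: xs)
    case (Suc t)
    then obtain ys h where ys: "ys \<in> set_pmf (markov_traj st x0 t)" and h: "h \<in> set_pmf (st (last ys))"
      and xs: "xs = ys @ [h]" by auto
    note IH = Suc.IH[OF ys]
    then have "last ys = ys ! t" by (metis diff_Suc_1 last_conv_nth list.size(3) nat.distinct(1))
    then show ?case
      using IH xs h by (auto simp: nth_append less_Suc_eq)
  qed simp
  then show "length xs = Suc t" and "xs ! 0 = x0" and "\<And>s. s < t \<Longrightarrow> xs ! Suc s \<in> set_pmf (st (xs ! s))"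
    by blast+
qed

lemma last_markov_traj: "xs \<in> set_pmf (markov_traj st x0 t) \<Longrightarrow> last xs = xs ! t"
  using set_pmf_markov_traj(1) by (metis diff_Suc_1 last_conv_nth list.size(3) nat.distinct(1))

lemma finite_set_pmf_markov_traj:
  assumes "\<And>x. finite (set_pmf (st x))"
  shows "finite (set_pmf (markov_traj st x0 t))"
proof (induction t)
  case (Suc t)
  have "set_pmf (markov_traj st x0 (Suc t)) =
        (\<Union>xs\<in>set_pmf (markov_traj st x0 t). (\<lambda>h. xs @ [h]) ` set_pmf (st (last xs)))"
    by (auto simp: set_bind_pmf)
  then show ?case using Suc assms by simp
qed simp

lemma map_take_markov_traj:
  "map_pmf (take (Suc t)) (markov_traj st x0 (t + m)) = markov_traj st x0 t"
proof (induction m)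
  case 0
  have "map_pmf (take (Suc t)) (markov_traj st x0 t) = map_pmf id (markov_traj st x0 t)"
    by (intro map_pmf_cong refl) (simp add: set_pmf_markov_traj(1))
  then show ?case by simp
next
  case (Suc m)
  have "map_pmf (take (Suc t)) (markov_traj st x0 (t + Suc m)) =
        do { xs \<leftarrow> markov_traj st x0 (t + m); h \<leftarrow> st (last xs); return_pmf (take (Suc t) (xs @ [h])) }"
    by (simp add: map_bind_pmf)
  also have "\<dots> = do { xs \<leftarrow> markov_traj st x0 (t + m); h \<leftarrow> st (last xs); return_pmf (take (Suc t) xs) }"
    by (intro bind_pmf_cong refl) (simp add: set_pmf_markov_traj(1))
  also have "\<dots> = map_pmf (take (Suc t)) (markov_traj st x0 (t + m))"
    by (simp add: map_pmf_def bind_return_pmf' bind_pmf_const)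
  finally show ?case using Suc.IH by simp
qed

lemma expectation_bind_pmf_finite:
  fixes f :: "'b \<Rightarrow> real"
  assumes "finite (set_pmf M)" "\<And>x. x \<in> set_pmf M \<Longrightarrow> finite (set_pmf (N x))"
  shows "measure_pmf.expectation (M \<bind> N) f =
         measure_pmf.expectation M (\<lambda>x. measure_pmf.expectation (N x) f)"
proof -
  have "measure_pmf.expectation (M \<bind> N) f = (\<Sum>a\<in>set_pmf M. pmf M a *\<^sub>R measure_pmf.expectation (N a) f)"
    using assms by (intro pmf_expectation_bind) auto
  also have "\<dots> = measure_pmf.expectation M (\<lambda>x. measure_pmf.expectation (N x) f)"
    using assms by (subst integral_measure_pmf[of "set_pmf M"]) (auto simp: mult.commute)
  finally show ?thesis .
qed

definition drift :: "('s \<Rightarrow> 's pmf) \<Rightarrow> ('s \<Rightarrow> real) \<Rightarrow> 's \<Rightarrow> real" where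
  "drift st g x = measure_pmf.expectation (st x) (\<lambda>y. g y - g x)"

text \<open>The Doob decomposition: \<open>g(X\<^sub>t)\<close> minus its accumulated drift is a martingale.\<close>

definition compensated :: "('s \<Rightarrow> 's pmf) \<Rightarrow> ('s \<Rightarrow> real) \<Rightarrow> nat \<Rightarrow> 's list \<Rightarrow> real" where
  "compensated st g t xs = g (xs ! t) - g (xs ! 0) - (\<Sum>s<t. drift st g (xs ! s))"

locale unit_increments =
  fixes st :: "'s \<Rightarrow> 's pmf" and g :: "'s \<Rightarrow> real"
  assumes finite_step: "\<And>x. finite (set_pmf (st x))"
    and increment: "\<And>x y. y \<in> set_pmf (st x) \<Longrightarrow> 0 \<le> g y - g x \<and> g y - g x \<le> 1"
begin

lemma drift_bounds: "0 \<le> drift st g x \<and> drift st g x \<le> 1"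
proof
  show "0 \<le> drift st g x"
    unfolding drift_def using increment by (intro integral_nonneg_AE) (auto simp: AE_measure_pmf_iff)
  have "drift st g x \<le> measure_pmf.expectation (st x) (\<lambda>_. 1::real)"
    unfolding drift_def using increment finite_step
    by (intro integral_mono_AE) (auto simp: AE_measure_pmf_iff integrable_measure_pmf_finite)
  then show "drift st g x \<le> 1" by simp
qed

lemma compensated_second_moment_le:
  "measure_pmf.expectation (markov_traj st x0 t) (\<lambda>xs. (compensated st g t xs)\<^sup>2) \<le> t"
proof (induction t)
  case 0 then show ?case by (simp add: compensated_def)
next
  case (Suc t)
  have int: "integrable (measure_pmf (st x)) f" for x and f :: "'s \<Rightarrow> real"
    using finite_step by (rule integrable_measure_pmf_finite)
  define D where "D x y = g y - g x - drift st g x" for x y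
  have mean_D: "measure_pmf.expectation (st x) (D x) = 0" for x
    unfolding D_def drift_def using int by simp
  have D_sq: "(D x y)\<^sup>2 \<le> 1" if "y \<in> set_pmf (st x)" for x y
  proof -
    have "\<bar>D x y\<bar> \<le> 1" using increment[OF that] drift_bounds[of x] by (auto simp: D_def abs_le_iff)
    then show ?thesis by (simp add: abs_square_le_1)
  qed
  have step: "measure_pmf.expectation (st x) (\<lambda>y. (m + D x y)\<^sup>2) \<le> m\<^sup>2 + 1" for x m
  proof -
    have "measure_pmf.expectation (st x) (\<lambda>y. (m + D x y)\<^sup>2) =
          m\<^sup>2 + measure_pmf.expectation (st x) (\<lambda>y. (D x y)\<^sup>2) + 2 * m * measure_pmf.expectation (st x) (D x)"
      using int by (simp add: power2_sum)
    also have "measure_pmf.expectation (st x) (\<lambda>y. (D x y)\<^sup>2) \<le> measure_pmf.expectation (st x) (\<lambda>_. 1::real)"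
      using D_sq int by (intro integral_mono_AE) (auto simp: AE_measure_pmf_iff)
    finally show ?thesis by (simp add: mean_D)
  qed
  have extend: "compensated st g (Suc t) (xs @ [h]) = compensated st g t xs + D (last xs) h"
    if "xs \<in> set_pmf (markov_traj st x0 t)" for xs h
  proof -
    have "length xs = Suc t" using set_pmf_markov_traj(1)[OF that] .
    moreover have "(\<Sum>s<Suc t. drift st g ((xs @ [h]) ! s)) = (\<Sum>s<Suc t. drift st g (xs ! s))"
      using calculation by (intro sum.cong) (auto simp: nth_append)
    ultimately show ?thesis
      using last_markov_traj[OF that] by (simp add: compensated_def D_def nth_append)
  qed
  have fin: "finite (set_pmf (markov_traj st x0 t))"
    by (rule finite_set_pmf_markov_traj[OF finite_step])
  have "measure_pmf.expectation (markov_traj st x0 (Suc t)) (\<lambda>xs. (compensated st g (Suc t) xs)\<^sup>2) =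
        measure_pmf.expectation (markov_traj st x0 t)
          (\<lambda>xs. measure_pmf.expectation (st (last xs)) (\<lambda>h. (compensated st g (Suc t) (xs @ [h]))\<^sup>2))"
    using fin finite_step by (simp add: expectation_bind_pmf_finite set_bind_pmf)
  also have "\<dots> = measure_pmf.expectation (markov_traj st x0 t)
          (\<lambda>xs. measure_pmf.expectation (st (last xs)) (\<lambda>h. (compensated st g t xs + D (last xs) h)\<^sup>2))"
    by (intro integral_cong_AE) (auto simp: AE_measure_pmf_iff extend)
  also have "\<dots> \<le> measure_pmf.expectation (markov_traj st x0 t) (\<lambda>xs. (compensated st g t xs)\<^sup>2 + 1)"
    using fin step by (intro integral_mono_AE) (auto simp: integrable_measure_pmf_finite)
  also have "\<dots> = measure_pmf.expectation (markov_traj st x0 t) (\<lambda>xs. (compensated st g t xs)\<^sup>2) + 1"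
    using fin by (subst Bochner_Integration.integral_add) (auto simp: integrable_measure_pmf_finite)
  finally show ?case using Suc.IH by simp
qed

lemma compensated_deviation_prob_le:
  assumes a: "a > 0" and tN: "t \<le> N"
  shows "measure_pmf.prob (markov_traj st x0 N) {xs. a \<le> \<bar>compensated st g t xs\<bar>} \<le> t / a\<^sup>2"
proof -
  obtain m where N: "N = t + m" using tN le_Suc_ex by blast
  have "compensated st g t (take (Suc t) xs) = compensated st g t xs"
    if "xs \<in> set_pmf (markov_traj st x0 N)" for xs
    using set_pmf_markov_traj(1)[OF that] tN unfolding compensated_def by (simp add: nth_take)
  then have "measure_pmf.prob (markov_traj st x0 N) {xs. a \<le> \<bar>compensated st g t xs\<bar>} =
        measure_pmf.prob (map_pmf (take (Suc t)) (markov_traj st x0 N)) {xs. a \<le> \<bar>compensated st g t xs\<bar>}"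
    by (simp, intro measure_pmf.finite_measure_eq_AE) (auto simp: AE_measure_pmf_iff)
  also have "\<dots> = measure_pmf.prob (markov_traj st x0 t) {xs. a \<le> \<bar>compensated st g t xs\<bar>}"
    unfolding N map_take_markov_traj ..
  also have "\<dots> \<le> measure_pmf.expectation (markov_traj st x0 t) (\<lambda>xs. (compensated st g t xs)\<^sup>2) / a\<^sup>2"
    using measure_pmf.second_moment_method[of "compensated st g t" "markov_traj st x0 t" a] a
      finite_set_pmf_markov_traj[OF finite_step] by (simp add: integrable_measure_pmf_finite)
  also have "\<dots> \<le> t / a\<^sup>2"
    using compensated_second_moment_le by (intro divide_right_mono) auto
  finally show ?thesis .
qed

lemma compensated_lipschitz:
  assumes xs: "xs \<in> set_pmf (markov_traj st x0 N)" and "t \<le> t'" "t' \<le> N"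
  shows "\<bar>compensated st g t' xs - compensated st g t xs\<bar> \<le> t' - t"
  using assms(2,3)
proof (induction t' rule: dec_induct)
  case (step m)
  have "xs ! Suc m \<in> set_pmf (st (xs ! m))"
    using set_pmf_markov_traj(3)[OF xs] step by auto
  then have "\<bar>compensated st g (Suc m) xs - compensated st g m xs\<bar> \<le> 1"
    using increment drift_bounds[of "xs ! m"] by (fastforce simp: compensated_def)
  then show ?case using step by linarith
qed simp

end

fun kernel_iter :: "('s \<Rightarrow> 's pmf) \<Rightarrow> nat \<Rightarrow> 's \<Rightarrow> 's pmf" where
  "kernel_iter st 0 x = return_pmf x"
| "kernel_iter st (Suc m) x = st x \<bind> kernel_iter st m"

lemma kernel_iter_Suc_right: "kernel_iter st (Suc m) x = kernel_iter st m x \<bind> st"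
proof (induction m arbitrary: x)
  case 0
  have "kernel_iter st 0 = return_pmf" by (rule ext) simp
  then show ?case by (simp add: bind_return_pmf bind_return_pmf')
next
  case (Suc m)
  have "kernel_iter st (Suc m) = (\<lambda>y. kernel_iter st m y \<bind> st)"
    by (rule ext) (rule Suc.IH)
  then have "kernel_iter st (Suc (Suc m)) x = st x \<bind> (\<lambda>y. kernel_iter st m y \<bind> st)"
    by (simp only: kernel_iter.simps(2))
  also have "\<dots> = kernel_iter st (Suc m) x \<bind> st" by (simp add: bind_assoc_pmf)
  finally show ?case .
qed

lemma map_last_markov_traj: "map_pmf last (markov_traj st x0 t) = kernel_iter st t x0"
proof (induction t)
  case (Suc t)
  have "map_pmf last (markov_traj st x0 (Suc t)) = markov_traj st x0 t \<bind> (\<lambda>xs. st (last xs))"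
    by (simp add: map_bind_pmf bind_return_pmf' map_pmf_def[symmetric] pmf.map_comp o_def)
  also have "\<dots> = map_pmf last (markov_traj st x0 t) \<bind> st" by (simp add: bind_map_pmf)
  finally show ?case using Suc by (simp only: kernel_iter_Suc_right)
qed simp

section \<open>One step of the exploration\<close>

definition next_height :: "nat \<Rightarrow> nat \<Rightarrow> nat" where
  "next_height K j = (if j \<le> K - 1 then j + 1 else 0)"

definition max_joined_height :: "nat \<Rightarrow> expl_state \<Rightarrow> (nat \<Rightarrow> bool) \<Rightarrow> nat" where
  "max_joined_height n h J = Max (insert 0 {k. \<exists>w\<in>explored n h. J w \<and> h w = Some k})"

definition join_pmf :: "nat \<Rightarrow> real \<Rightarrow> expl_state \<Rightarrow> (nat \<Rightarrow> bool) pmf" where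
  "join_pmf n p h = Pi_pmf (explored n h) False (\<lambda>_. bernoulli_pmf p)"

definition new_height_pmf :: "nat \<Rightarrow> real \<Rightarrow> nat \<Rightarrow> expl_state \<Rightarrow> nat pmf" where
  "new_height_pmf n p K h = map_pmf (\<lambda>J. next_height K (max_joined_height n h J)) (join_pmf n p h)"

definition valid_state :: "nat \<Rightarrow> nat \<Rightarrow> expl_state \<Rightarrow> bool" where
  "valid_state n K h \<longleftrightarrow> (\<forall>v. n \<le> v \<longrightarrow> h v = None) \<and> (\<forall>v j. h v = Some j \<longrightarrow> j \<le> K)"

definition count_above :: "nat \<Rightarrow> expl_state \<Rightarrow> nat \<Rightarrow> nat" where
  "count_above n h m = card {w. w < n \<and> (\<exists>j. h w = Some j \<and> m < j)}"

lemma finite_explored [simp]: "finite (explored n h)"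
  unfolding explored_def by auto

lemma finite_unexplored [simp]: "finite (unexplored n h)"
  unfolding unexplored_def by auto

lemma explored_Un_unexplored: "explored n h \<union> unexplored n h = {..<n}"
  unfolding explored_def unexplored_def by auto

lemma unexplored_fun_upd: "unexplored n (h(x := Some y)) = unexplored n h - {x}"
  unfolding unexplored_def by auto

lemma expl_step_eq:
  assumes "unexplored n h \<noteq> {}"
  shows "expl_step n p K h =
    do { v \<leftarrow> pmf_of_set (unexplored n h); x \<leftarrow> new_height_pmf n p K h; return_pmf (h(v := Some x)) }"
  using assms unfolding expl_step_def new_height_pmf_def join_pmf_def max_joined_height_def next_height_def
  by (simp add: Let_def bind_map_pmf o_def)

lemma expl_step_done: "unexplored n h = {} \<Longrightarrow> expl_step n p K h = return_pmf h"
  unfolding expl_step_def by simp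

lemma set_pmf_new_height: "K \<ge> 1 \<Longrightarrow> set_pmf (new_height_pmf n p K h) \<subseteq> {..K}"
  unfolding new_height_pmf_def next_height_def by auto

lemma set_pmf_expl_step:
  assumes "K \<ge> 1" "y \<in> set_pmf (expl_step n p K h)"
  shows "(unexplored n h = {} \<and> y = h) \<or> (\<exists>v\<in>unexplored n h. \<exists>x\<le>K. y = h(v := Some x))"
proof (cases "unexplored n h = {}")
  case True then show ?thesis using assms by (simp add: expl_step_done)
next
  case False
  then show ?thesis using assms set_pmf_new_height[OF assms(1), of n p h]
    by (auto simp: expl_step_eq set_bind_pmf)
qed

lemma finite_set_pmf_expl_step:
  assumes "K \<ge> 1"
  shows "finite (set_pmf (expl_step n p K h))"
proof (rule finite_subset)
  show "set_pmf (expl_step n p K h) \<subseteq> insert h ((\<lambda>(v, x). h(v := Some x)) ` (unexplored n h \<times> {..K}))"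
    using set_pmf_expl_step[OF assms] by fastforce
qed simp

lemma valid_state_expl_step:
  assumes "K \<ge> 1" "valid_state n K h" "y \<in> set_pmf (expl_step n p K h)"
  shows "valid_state n K y"
  using set_pmf_expl_step[OF assms(1,3)] assms(2) unfolding valid_state_def unexplored_def
  by (auto split: if_splits)

lemma card_explored_expl_step:
  assumes K: "K \<ge> 1" and y: "y \<in> set_pmf (expl_step n p K h)" and m: "card (explored n h) = m" "m \<le> n"
  shows "card (explored n y) = min (Suc m) n"
proof (cases "unexplored n h = {}")
  case True
  then have "explored n h = {..<n}" using explored_Un_unexplored[of n h] by auto
  then show ?thesis using y m True by (simp add: expl_step_done)
next
  case False
  then obtain v x where v: "v \<in> unexplored n h" and yv: "y = h(v := Some x)"
    using set_pmf_expl_step[OF K y] by auto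
  then have "explored n y = insert v (explored n h)" "v \<notin> explored n h"
    by (auto simp: explored_def unexplored_def)
  then have "card (explored n y) = Suc m" using m by simp
  moreover have "card (explored n y) \<le> n"
    using card_mono[of "{..<n}" "explored n y"] by (auto simp: explored_def)
  ultimately show ?thesis by simp
qed

lemma A_count_fun_upd:
  assumes "v \<in> unexplored n h"
  shows "A_count n (h(v := Some x)) k = A_count n h k + of_bool (x = k)"
proof -
  have v: "v < n" "h v = None" using assms by (auto simp: unexplored_def)
  have "{w. w < n \<and> (h(v := Some x)) w = Some k} =
        (if x = k then insert v {w. w < n \<and> h w = Some k} else {w. w < n \<and> h w = Some k})"
    using v by auto
  then show ?thesis unfolding A_count_def using v by simp
qed

lemma unit_increments_A_count:
  assumes "K \<ge> 1"
  shows "unit_increments (expl_step n p K) (\<lambda>h. real (A_count n h k))"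
proof
  fix x y assume "y \<in> set_pmf (expl_step n p K x)"
  then consider "y = x" | v j where "v \<in> unexplored n x" "y = x(v := Some j)"
    using set_pmf_expl_step[OF assms] by blast
  then show "0 \<le> real (A_count n y k) - real (A_count n x k) \<and> real (A_count n y k) - real (A_count n x k) \<le> 1"
    by cases (simp_all add: A_count_fun_upd)
qed (rule finite_set_pmf_expl_step[OF assms])

lemma drift_A_count:
  assumes U: "unexplored n h \<noteq> {}"
  shows "drift (expl_step n p K) (\<lambda>h. real (A_count n h k)) h = pmf (new_height_pmf n p K h) k"
proof -
  let ?X = "new_height_pmf n p K h"
  let ?f = "\<lambda>y. real (A_count n y k) - real (A_count n h k)"
  have "map_pmf ?f (expl_step n p K h) =
        pmf_of_set (unexplored n h) \<bind> (\<lambda>v. map_pmf (\<lambda>x. ?f (h(v := Some x))) ?X)"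
    unfolding expl_step_eq[OF U] by (simp add: map_pmf_def bind_assoc_pmf bind_return_pmf)
  also have "\<dots> = pmf_of_set (unexplored n h) \<bind> (\<lambda>_. map_pmf (indicator {k}) ?X)"
  proof (intro bind_pmf_cong refl map_pmf_cong)
    fix v x assume "v \<in> set_pmf (pmf_of_set (unexplored n h))"
    then have "v \<in> unexplored n h" using U by simp
    then show "?f (h(v := Some x)) = indicator {k} x"
      by (simp add: A_count_fun_upd indicator_def)
  qed
  also have "\<dots> = map_pmf (indicator {k}) ?X"
    by (simp add: bind_pmf_const)
  finally have law: "map_pmf ?f (expl_step n p K h) = map_pmf (indicator {k}) ?X" .
  have "drift (expl_step n p K) (\<lambda>h. real (A_count n h k)) h =
        measure_pmf.expectation (map_pmf ?f (expl_step n p K h)) (\<lambda>z. z)"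
    unfolding drift_def by simp
  then show ?thesis unfolding law by (simp add: measure_pmf_single)
qed

lemma prob_max_joined_height_le:
  assumes p: "0 \<le> p" "p \<le> 1"
  shows "measure_pmf.prob (join_pmf n p h) {J. max_joined_height n h J \<le> m} = (1 - p) ^ count_above n h m"
proof -
  define B where "B = {w. w < n \<and> (\<exists>j. h w = Some j \<and> m < j)}"
  define allowed where "allowed w = (if w \<in> B then {False} else UNIV)" for w
  have B_explored: "B \<subseteq> explored n h" unfolding B_def explored_def by auto
  have fin: "finite {k. \<exists>w\<in>explored n h. J w \<and> h w = Some k}" for J
    by (rule finite_subset[of _ "(\<lambda>w. the (h w)) ` explored n h"]) force+
  have "max_joined_height n h J \<le> m \<longleftrightarrow> (\<forall>w\<in>explored n h. J w \<in> allowed w)" for J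
  proof -
    have "max_joined_height n h J \<le> m \<longleftrightarrow> (\<forall>k\<in>{k. \<exists>w\<in>explored n h. J w \<and> h w = Some k}. k \<le> m)"
      unfolding max_joined_height_def using fin[of J] by simp
    also have "\<dots> \<longleftrightarrow> (\<forall>w\<in>explored n h. J w \<in> allowed w)"
      unfolding allowed_def B_def explored_def by (auto simp: not_less) (metis not_le)+
    finally show ?thesis .
  qed
  then have event: "{J. max_joined_height n h J \<le> m} = Pi (explored n h) allowed"
    by (auto simp: Pi_def)
  have "measure_pmf.prob (join_pmf n p h) {J. max_joined_height n h J \<le> m} =
        (\<Prod>w\<in>explored n h. measure_pmf.prob (bernoulli_pmf p) (allowed w))"
    unfolding event join_pmf_def by (rule measure_Pi_pmf_Pi) simp
  also have "\<dots> = (\<Prod>w\<in>explored n h. if w \<in> B then 1 - p else 1)"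
    using p by (intro prod.cong) (auto simp: allowed_def measure_pmf_single)
  also have "\<dots> = (1 - p) ^ card B"
    using B_explored by (simp add: prod.If_cases Int_absorb1)
  finally show ?thesis by (simp add: B_def count_above_def)
qed

lemma pmf_new_height:
  assumes p: "0 \<le> p" "p \<le> 1" and k: "k \<in> {1..K}"
  shows "pmf (new_height_pmf n p K h) k = (if k = 1 then (1 - p) ^ count_above n h 0
           else (1 - p) ^ count_above n h (k - 1) - (1 - p) ^ count_above n h (k - 2))"
proof -
  let ?P = "\<lambda>m. measure_pmf.prob (join_pmf n p h) {J. max_joined_height n h J \<le> m}"
  have "{J. next_height K (max_joined_height n h J) = k} = {J. max_joined_height n h J = k - 1}"
    using k unfolding next_height_def by auto
  then have eq: "pmf (new_height_pmf n p K h) k =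
                 measure_pmf.prob (join_pmf n p h) {J. max_joined_height n h J = k - 1}"
    unfolding new_height_pmf_def by (simp add: pmf_map vimage_def)
  show ?thesis
  proof (cases "k = 1")
    case True
    then show ?thesis using eq prob_max_joined_height_le[OF p, of n h 0] by simp
  next
    case False
    then have diff: "{J. max_joined_height n h J = k - 1} =
               {J. max_joined_height n h J \<le> k - 1} - {J. max_joined_height n h J \<le> k - 2}"
      using k by auto
    have "{J. max_joined_height n h J \<le> k - 1} \<inter> {J. max_joined_height n h J \<le> k - 2} =
          {J. max_joined_height n h J \<le> k - 2}" by auto
    then have "measure_pmf.prob (join_pmf n p h) {J. max_joined_height n h J = k - 1} =
               ?P (k - 1) - ?P (k - 2)"
      unfolding diff by (simp add: measure_pmf.finite_measure_Diff')
    then show ?thesis using eq prob_max_joined_height_le[OF p] False by simp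
  qed
qed

lemma count_above_eq_sum:
  assumes "valid_state n K h"
  shows "count_above n h m = (\<Sum>i=Suc m..K. A_count n h i)"
proof -
  have "{w. w < n \<and> (\<exists>j. h w = Some j \<and> m < j)} = (\<Union>i\<in>{Suc m..K}. {w. w < n \<and> h w = Some i})"
    using assms unfolding valid_state_def by fastforce
  then have "count_above n h m = card (\<Union>i\<in>{Suc m..K}. {w. w < n \<and> h w = Some i})"
    by (simp add: count_above_def)
  also have "\<dots> = (\<Sum>i=Suc m..K. card {w. w < n \<and> h w = Some i})"
    by (rule card_UN_disjoint) auto
  finally show ?thesis by (simp add: A_count_def)
qed

lemma count_above_le: "count_above n h m \<le> n"
  unfolding count_above_def
  using card_mono[of "{..<n}" "{w. w < n \<and> (\<exists>j. h w = Some j \<and> m < j)}"] by auto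

lemma one_minus_power_approx_exp:
  fixes x :: real
  assumes x: "0 \<le> x" "x \<le> 1/2"
  shows "\<bar>(1 - x) ^ m - exp (- (real m * x))\<bar> \<le> 2 * real m * x\<^sup>2"
proof -
  have eq: "(1 - x) ^ m = exp (real m * ln (1 - x))"
    using x by (simp add: exp_of_nat_mult)
  have ln_lo: "- x - 2 * x\<^sup>2 \<le> ln (1 - x)" using ln_one_minus_pos_lower_bound[OF x] .
  have lo: "exp (- (real m * x) - 2 * real m * x\<^sup>2) \<le> (1 - x) ^ m"
    unfolding eq using mult_left_mono[OF ln_lo, of "real m"] by (simp add: algebra_simps)
  have ln_hi: "ln (1 - x) \<le> - x" using ln_one_minus_pos_upper_bound[of x] x by simp
  have hi: "(1 - x) ^ m \<le> exp (- (real m * x))"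
    unfolding eq using mult_left_mono[OF ln_hi, of "real m"] by simp
  have "exp (- (real m * x)) - exp (- (real m * x) - 2 * real m * x\<^sup>2) \<le> 2 * real m * x\<^sup>2"
    using exp_neg_lipschitz[of 1 "real m * x" "real m * x + 2 * real m * x\<^sup>2"] x
    by (simp add: algebra_simps)
  then show ?thesis using lo hi by (simp add: abs_le_iff)
qed

definition density :: "nat \<Rightarrow> expl_state \<Rightarrow> nat \<Rightarrow> real" where
  "density n h i = real (A_count n h i) / real n"

lemma density_nonneg: "0 \<le> density n h i"
  unfolding density_def by simp

text \<open>One step of the exploration moves \<open>A\<^sub>k\<close> in mean by \<open>\<delta>\<^sub>k(A/n)\<close>, up to \<open>O(1/n)\<close>:
  the new height is \<open>k\<close> iff no explored vertex above height \<open>k - 1\<close> is joined but one at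
  height \<open>k - 1\<close> is, and \<open>(1 - c/n)\<^bsup>count\<^esup>\<close> is close to \<open>exp (- c count / n)\<close>.\<close>

lemma drift_A_count_approx:
  assumes c: "c > 0" and valid: "valid_state n K h" and U: "unexplored n h \<noteq> {}"
    and n: "real n \<ge> 2 * c" and k: "k \<in> {1..K}"
  shows "\<bar>drift (expl_step n (c / real n) K) (\<lambda>h. real (A_count n h k)) h
          - delta c K (density n h) k\<bar> \<le> 4 * c\<^sup>2 / real n"
proof -
  have n0: "real n > 0" using n c by linarith
  define x where "x = c / real n"
  have x: "0 \<le> x" "x \<le> 1/2" using c n n0 by (auto simp: x_def field_simps)
  have approx: "\<bar>(1 - x) ^ count_above n h m - exp (- c * (\<Sum>i=Suc m..K. density n h i))\<bar>
                \<le> 2 * c\<^sup>2 / real n" for m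
  proof -
    have "exp (- c * (\<Sum>i=Suc m..K. density n h i)) = exp (- (real (count_above n h m) * x))"
      using count_above_eq_sum[OF valid, of m] by (simp add: x_def density_def sum_divide_distrib[symmetric])
    moreover have "2 * real (count_above n h m) * x\<^sup>2 \<le> 2 * real n * x\<^sup>2"
      using count_above_le[of n h m] by (intro mult_right_mono) auto
    moreover have "2 * real n * x\<^sup>2 = 2 * c\<^sup>2 / real n"
      using n0 by (simp add: x_def power2_eq_square)
    ultimately show ?thesis using one_minus_power_approx_exp[OF x, of "count_above n h m"] by simp
  qed
  have "0 \<le> c / real n" "c / real n \<le> 1" using x unfolding x_def by linarith+
  then have drift: "drift (expl_step n (c / real n) K) (\<lambda>h. real (A_count n h k)) h =
      (if k = 1 then (1 - x) ^ count_above n h 0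
       else (1 - x) ^ count_above n h (k - 1) - (1 - x) ^ count_above n h (k - 2))"
    using drift_A_count[OF U] pmf_new_height[OF _ _ k] by (simp add: x_def)
  show ?thesis
  proof (cases "k = 1")
    case True
    then show ?thesis using drift approx[of 0] c n0 by (simp add: delta_def)
  next
    case False
    then have k2: "k \<in> {2..K}" "Suc (k - 1) = k" "Suc (k - 2) = k - 1" using k by auto
    let ?e = "\<lambda>j. exp (- c * (\<Sum>i=j..K. density n h i))"
    have "drift (expl_step n (c / real n) K) (\<lambda>h. real (A_count n h k)) h =
          (1 - x) ^ count_above n h (k - 1) - (1 - x) ^ count_above n h (k - 2)"
      using drift False by simp
    moreover have "\<bar>(1 - x) ^ count_above n h (k - 1) - ?e k\<bar> \<le> 2 * c\<^sup>2 / real n"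
      using approx[of "k - 1"] k2 by simp
    moreover have "\<bar>(1 - x) ^ count_above n h (k - 2) - ?e (k - 1)\<bar> \<le> 2 * c\<^sup>2 / real n"
      using approx[of "k - 2"] k2 by simp
    ultimately show ?thesis
      unfolding delta_eq_diff_exp[OF k2(1)] abs_le_iff by linarith
  qed
qed

section \<open>Fluid limit of the exploration\<close>

lemma valid_state_markov_traj:
  assumes K: "K \<ge> 1" and xs: "xs \<in> set_pmf (markov_traj (expl_step n p K) expl_init N)" and s: "s \<le> N"
  shows "valid_state n K (xs ! s) \<and> card (explored n (xs ! s)) = min s n"
  using s
proof (induction s)
  case 0
  then show ?case
    using set_pmf_markov_traj(2)[OF xs] by (simp add: valid_state_def expl_init_def explored_def)
next
  case (Suc s)
  have "xs ! Suc s \<in> set_pmf (expl_step n p K (xs ! s))"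
    using set_pmf_markov_traj(3)[OF xs] Suc.prems by auto
  then show ?case
    using Suc valid_state_expl_step[OF K] card_explored_expl_step[OF K, of "xs ! Suc s" n p "xs ! s" "min s n"]
    by (auto simp: min_def split: if_splits)
qed

lemma unexplored_markov_traj_nonempty:
  assumes K: "K \<ge> 1" and xs: "xs \<in> set_pmf (markov_traj (expl_step n p K) expl_init N)"
    and s: "s \<le> N" "s < n"
  shows "unexplored n (xs ! s) \<noteq> {}"
proof
  assume "unexplored n (xs ! s) = {}"
  then have "explored n (xs ! s) = {..<n}" using explored_Un_unexplored[of n "xs ! s"] by auto
  then show False using valid_state_markov_traj[OF K xs s(1)] s(2) by simp
qed

lemma one_step_error:
  assumes c: "c > 0" and sol: "solves_tetris_ode c K \<alpha>"
    and valid: "valid_state n K h" and U: "unexplored n h \<noteq> {}"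
    and n: "real n \<ge> 2 * c" and s: "s < n" and k: "k \<in> {1..K}"
  shows "\<bar>drift (expl_step n (c / real n) K) (\<lambda>h. real (A_count n h k)) h / real n
            - (\<alpha> (real (Suc s) / real n) k - \<alpha> (real s / real n) k)\<bar>
         \<le> (4 * c\<^sup>2 + 2 * c * K) / (real n)\<^sup>2 + 2 * c / real n * l1_dist K (density n h) (\<alpha> (real s / real n))"
proof -
  let ?q = "drift (expl_step n (c / real n) K) (\<lambda>h. real (A_count n h k)) h"
  let ?a = "\<alpha> (real s / real n)"
  have nr: "real n > 0" using s by simp
  have sn: "real s / real n \<in> {0..1}" using s nr by auto
  have chain: "\<bar>?q - delta c K (density n h) k\<bar> \<le> 4 * c\<^sup>2 / real n"
    by (rule drift_A_count_approx[OF c valid U n k])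
  have lip: "\<bar>delta c K (density n h) k - delta c K ?a k\<bar> \<le> 2 * c * l1_dist K (density n h) ?a"
    using solution_nonneg[OF c sol _ sn] by (intro delta_lipschitz[OF c _ _ k]) (auto simp: density_nonneg)
  have step: "real (Suc s) / real n - real s / real n = 1 / real n"
    using nr by (simp add: field_simps)
  have "\<bar>\<alpha> (real (Suc s) / real n) k - ?a k - (real (Suc s) / real n - real s / real n) * delta c K ?a k\<bar>
        \<le> 2 * c * K * (real (Suc s) / real n - real s / real n)\<^sup>2"
  proof (rule solution_increment_approx[OF c sol k])
    show "real s / real n \<le> real (Suc s) / real n"
      using nr by (simp add: divide_right_mono)
    show "real (Suc s) / real n \<le> 1"
      using s nr by simp
  qed simp
  then have ode: "\<bar>\<alpha> (real (Suc s) / real n) k - ?a k - delta c K ?a k / real n\<bar> \<le> 2 * c * K / (real n)\<^sup>2"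
    unfolding step by (simp add: power_one_over)
  have "\<bar>?q / real n - delta c K (density n h) k / real n\<bar> \<le> 4 * c\<^sup>2 / (real n)\<^sup>2"
    using divide_right_mono[OF chain, of "real n"] nr
    by (simp add: abs_divide power2_eq_square flip: diff_divide_distrib)
  moreover have "\<bar>delta c K (density n h) k / real n - delta c K ?a k / real n\<bar>
                 \<le> 2 * c / real n * l1_dist K (density n h) ?a"
    using divide_right_mono[OF lip, of "real n"] nr by (simp add: abs_divide flip: diff_divide_distrib)
  moreover have "(4 * c\<^sup>2 + 2 * c * K) / (real n)\<^sup>2 = 4 * c\<^sup>2 / (real n)\<^sup>2 + 2 * c * K / (real n)\<^sup>2"
    by (rule add_divide_distrib)
  ultimately show ?thesis
    using ode unfolding abs_le_iff by linarith
qed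

lemma discrete_gronwall:
  fixes e :: "nat \<Rightarrow> real"
  assumes b: "b \<ge> 0" and r: "r \<ge> 0"
    and rec: "\<And>t. t \<le> N \<Longrightarrow> e t \<le> b + r * (\<Sum>s<t. e s)"
  shows "t \<le> N \<Longrightarrow> e t \<le> b * (1 + r) ^ t"
proof (induction t rule: less_induct)
  case (less t)
  have geometric: "r * (\<Sum>s<t. (1 + r) ^ s) = (1 + r) ^ t - 1"
    by (induction t) (auto simp: algebra_simps)
  have "e t \<le> b + r * (\<Sum>s<t. e s)" using rec less.prems .
  also have "\<dots> \<le> b + r * (\<Sum>s<t. b * (1 + r) ^ s)"
    using less r by (intro add_left_mono mult_left_mono sum_mono) auto
  also have "\<dots> = b * (1 + r * (\<Sum>s<t. (1 + r) ^ s))"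
    by (simp add: sum_distrib_left algebra_simps)
  also have "\<dots> = b * (1 + r) ^ t"
    using geometric by simp
  finally show ?case .
qed

abbreviation expl_chain :: "nat \<Rightarrow> real \<Rightarrow> nat \<Rightarrow> expl_state list pmf" where
  "expl_chain n c K \<equiv> markov_traj (expl_step n (c / real n) K) expl_init n"

abbreviation A_compensated :: "nat \<Rightarrow> real \<Rightarrow> nat \<Rightarrow> nat \<Rightarrow> nat \<Rightarrow> expl_state list \<Rightarrow> real" where
  "A_compensated n c K k \<equiv> compensated (expl_step n (c / real n) K) (\<lambda>h. real (A_count n h k))"

text \<open>Writing \<open>A\<^sub>k(t)\<close> as accumulated drift plus martingale and \<open>\<alpha>\<^sub>k(t/n)\<close> as a telescoping sum,
  the error at a grid point is the martingale plus the accumulated one-step errors.\<close>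

lemma grid_error_le_sum:
  assumes c: "c > 0" and K: "K \<ge> 1" and sol: "solves_tetris_ode c K \<alpha>"
    and n: "real n \<ge> 2 * c" and xs: "xs \<in> set_pmf (expl_chain n c K)"
    and t: "t \<le> n" and k: "k \<in> {1..K}"
  shows "\<bar>density n (xs ! t) k - \<alpha> (real t / real n) k\<bar>
         \<le> \<bar>A_compensated n c K k t xs\<bar> / real n
            + (\<Sum>s<t. (4 * c\<^sup>2 + 2 * c * K) / (real n)\<^sup>2
                       + 2 * c / real n * l1_dist K (density n (xs ! s)) (\<alpha> (real s / real n)))"
proof -
  let ?q = "\<lambda>s. drift (expl_step n (c / real n) K) (\<lambda>h. real (A_count n h k)) (xs ! s)"
  let ?d = "\<lambda>s. \<alpha> (real (Suc s) / real n) k - \<alpha> (real s / real n) k"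
  let ?L = "\<lambda>s. l1_dist K (density n (xs ! s)) (\<alpha> (real s / real n))"
  have "A_count n (xs ! 0) k = 0"
    using set_pmf_markov_traj(2)[OF xs] by (simp add: A_count_def expl_init_def)
  then have "real (A_count n (xs ! t) k) = (\<Sum>s<t. ?q s) + A_compensated n c K k t xs"
    by (simp add: compensated_def)
  then have "density n (xs ! t) k = (\<Sum>s<t. ?q s / real n) + A_compensated n c K k t xs / real n"
    by (simp add: density_def sum_divide_distrib add_divide_distrib)
  moreover have "\<alpha> (real t / real n) k = (\<Sum>s<t. ?d s)"
    using sum_lessThan_telescope[of "\<lambda>s. \<alpha> (real s / real n) k" t] solution_at_0[OF c sol k] by simp
  ultimately have "\<bar>density n (xs ! t) k - \<alpha> (real t / real n) k\<bar> =
        \<bar>A_compensated n c K k t xs / real n + (\<Sum>s<t. ?q s / real n - ?d s)\<bar>"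
    by (simp add: sum_subtractf)
  also have "\<dots> \<le> \<bar>A_compensated n c K k t xs\<bar> / real n + (\<Sum>s<t. \<bar>?q s / real n - ?d s\<bar>)"
  proof -
    have "\<bar>\<Sum>s<t. ?q s / real n - ?d s\<bar> \<le> (\<Sum>s<t. \<bar>?q s / real n - ?d s\<bar>)"
      by (rule sum_abs)
    moreover have "\<bar>A_compensated n c K k t xs / real n\<bar> = \<bar>A_compensated n c K k t xs\<bar> / real n"
      by simp
    ultimately show ?thesis
      using abs_triangle_ineq[of "A_compensated n c K k t xs / real n" "\<Sum>s<t. ?q s / real n - ?d s"]
      by linarith
  qed
  also have "\<dots> \<le> \<bar>A_compensated n c K k t xs\<bar> / real n
                 + (\<Sum>s<t. (4 * c\<^sup>2 + 2 * c * K) / (real n)\<^sup>2 + 2 * c / real n * ?L s)"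
  proof (intro add_left_mono sum_mono)
    fix s assume "s \<in> {..<t}"
    then have s: "s < n" "s \<le> n" using t by auto
    have "valid_state n K (xs ! s)" "unexplored n (xs ! s) \<noteq> {}"
      using valid_state_markov_traj[OF K xs s(2)] unexplored_markov_traj_nonempty[OF K xs s(2,1)] by auto
    from one_step_error[OF c sol this n s(1) k]
    show "\<bar>?q s / real n - ?d s\<bar> \<le> (4 * c\<^sup>2 + 2 * c * K) / (real n)\<^sup>2 + 2 * c / real n * ?L s" .
  qed
  finally show ?thesis .
qed
lemma grid_error_bound:
  assumes c: "c > 0" and K: "K \<ge> 1" and sol: "solves_tetris_ode c K \<alpha>"
    and n: "real n \<ge> 2 * c" and xs: "xs \<in> set_pmf (expl_chain n c K)"
    and z: "\<zeta> \<ge> 0"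
    and small: "\<And>t k. t \<le> n \<Longrightarrow> k \<in> {1..K} \<Longrightarrow> \<bar>A_compensated n c K k t xs\<bar> \<le> \<zeta> * real n"
    and t: "t \<le> n"
  shows "l1_dist K (density n (xs ! t)) (\<alpha> (real t / real n))
         \<le> (K * \<zeta> + K * (4 * c\<^sup>2 + 2 * c * K) / real n) * (1 + 2 * c * K / real n) ^ t"
proof (rule discrete_gronwall[where N = n and e = "\<lambda>s. l1_dist K (density n (xs ! s)) (\<alpha> (real s / real n))", OF _ _ _ t])
  show "0 \<le> K * \<zeta> + K * (4 * c\<^sup>2 + 2 * c * K) / real n" "0 \<le> 2 * c * K / real n"
    using z c by auto
  have nr: "real n > 0" using n c by linarith
  fix t assume t: "t \<le> n"
  let ?e = "\<lambda>s. l1_dist K (density n (xs ! s)) (\<alpha> (real s / real n))"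
  let ?C = "4 * c\<^sup>2 + 2 * c * K"
  have "?e t \<le> (\<Sum>k=1..K. \<zeta> + (\<Sum>s<t. ?C / (real n)\<^sup>2 + 2 * c / real n * ?e s))"
    unfolding l1_dist_def[of K "density n (xs ! t)"]
  proof (intro sum_mono)
    fix k assume k: "k \<in> {1..K}"
    have "\<bar>A_compensated n c K k t xs\<bar> / real n \<le> \<zeta>"
      using small[OF t k] nr by (simp add: pos_divide_le_eq)
    then show "\<bar>density n (xs ! t) k - \<alpha> (real t / real n) k\<bar>
               \<le> \<zeta> + (\<Sum>s<t. ?C / (real n)\<^sup>2 + 2 * c / real n * ?e s)"
      using grid_error_le_sum[OF c K sol n xs t k] by linarith
  qed
  also have "\<dots> = K * \<zeta> + K * (real t * ?C / (real n)\<^sup>2) + 2 * c * K / real n * (\<Sum>s<t. ?e s)"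
    by (simp add: sum.distrib sum_distrib_left algebra_simps sum_divide_distrib)
  also have "real t * ?C / (real n)\<^sup>2 \<le> real n * ?C / (real n)\<^sup>2"
    using t c by (intro divide_right_mono mult_right_mono) auto
  also have "real n * ?C / (real n)\<^sup>2 = ?C / real n"
    by (simp add: power2_eq_square)
  finally show "?e t \<le> K * \<zeta> + K * ?C / real n + 2 * c * K / real n * (\<Sum>s<t. ?e s)"
    by (simp add: mult_left_mono)
qed

lemma nat_floor_scaled_bounds:
  assumes t: "t \<in> {0..1}" and n: "n > 0"
  shows "nat \<lfloor>real n * t\<rfloor> \<le> n" and "\<bar>real (nat \<lfloor>real n * t\<rfloor>) / real n - t\<bar> \<le> 1 / real n"
proof -
  let ?s = "nat \<lfloor>real n * t\<rfloor>"
  have nr: "real n > 0" using n by simp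
  have fl: "real ?s \<le> real n * t" "real n * t < real ?s + 1"
    using t by (auto simp: of_nat_nat)
  moreover have "real n * t \<le> real n" using t nr by (simp add: mult_left_le)
  ultimately show "?s \<le> n" by linarith
  have "real ?s / real n \<le> t" using fl(1) nr by (simp add: divide_le_eq mult.commute)
  moreover have "t < (real ?s + 1) / real n" using fl(2) nr by (simp add: less_divide_eq mult.commute)
  ultimately show "\<bar>real ?s / real n - t\<bar> \<le> 1 / real n"
    using nr by (simp add: add_divide_distrib abs_if)
qed

lemma one_plus_div_power_le_exp:
  fixes a :: real
  assumes "0 \<le> a" "s \<le> n"
  shows "(1 + a / real n) ^ s \<le> exp a"
proof -
  have "(1 + a / real n) ^ s \<le> exp (a / real n) ^ s"
    using assms by (intro power_mono) (auto simp: add.commute exp_ge_add_one_self)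
  also have "\<dots> = exp (real s * (a / real n))" by (rule exp_of_nat_mult[symmetric])
  also have "\<dots> \<le> exp a"
    using assms by (cases "n = 0") (auto simp: field_simps mult_left_mono)
  finally show ?thesis .
qed

lemma uniform_error_bound:
  assumes c: "c > 0" and K: "K \<ge> 1" and sol: "solves_tetris_ode c K \<alpha>"
    and n: "real n \<ge> 2 * c" and xs: "xs \<in> set_pmf (expl_chain n c K)"
    and z: "\<zeta> \<ge> 0"
    and small: "\<And>t k. t \<le> n \<Longrightarrow> k \<in> {1..K} \<Longrightarrow> \<bar>A_compensated n c K k t xs\<bar> \<le> \<zeta> * real n"
    and t: "t \<in> {0..1}" and k: "k \<in> {1..K}"
  shows "\<bar>alpha_n n xs t k - \<alpha> t k\<bar>
         \<le> K * \<zeta> * exp (2 * c * K) + (K * (4 * c\<^sup>2 + 2 * c * K) * exp (2 * c * K) + 1) / real n"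
proof -
  have n0: "n > 0" using n c by (cases n) auto
  define s where "s = nat \<lfloor>real n * t\<rfloor>"
  define B where "B = K * \<zeta> + K * (4 * c\<^sup>2 + 2 * c * K) / real n"
  have sn: "s \<le> n" and near: "\<bar>real s / real n - t\<bar> \<le> 1 / real n"
    using nat_floor_scaled_bounds[OF t n0] by (simp_all add: s_def)
  have "alpha_n n xs t k = density n (xs ! s) k"
    by (simp add: alpha_n_def density_def s_def)
  moreover have "\<bar>density n (xs ! s) k - \<alpha> (real s / real n) k\<bar> \<le> B * exp (2 * c * K)"
  proof -
    have "\<bar>density n (xs ! s) k - \<alpha> (real s / real n) k\<bar> \<le> l1_dist K (density n (xs ! s)) (\<alpha> (real s / real n))"
      by (rule abs_diff_le_l1_dist[OF k])
    also have "\<dots> \<le> B * (1 + 2 * c * K / real n) ^ s"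
      unfolding B_def by (rule grid_error_bound[OF c K sol n xs z small sn])
    also have "\<dots> \<le> B * exp (2 * c * K)"
      using c z sn by (intro mult_left_mono one_plus_div_power_le_exp) (auto simp: B_def)
    finally show ?thesis .
  qed
  moreover have "\<bar>\<alpha> (real s / real n) k - \<alpha> t k\<bar> \<le> 1 / real n"
  proof -
    have "real s / real n \<in> {0..1}" using sn n0 by auto
    then have "dist (\<alpha> (real s / real n) k) (\<alpha> t k) \<le> 1 * dist (real s / real n) t"
      using lipschitz_onD[OF solution_bounds(2)[OF c sol k] _ t] by blast
    then show ?thesis using near by (simp add: dist_real_def)
  qed
  moreover have "B * exp (2 * c * K) + 1 / real n
      = K * \<zeta> * exp (2 * c * K) + (K * (4 * c\<^sup>2 + 2 * c * K) * exp (2 * c * K) + 1) / real n"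
    using n0 by (simp add: B_def field_simps)
  ultimately show ?thesis by linarith
qed

lemma exists_grid_point_below:
  assumes G: "G > 0" and n: "n > 0" and t: "t \<le> n"
  shows "\<exists>j\<le>G. j * n div G \<le> t \<and> real t - real (j * n div G) < 1 + real n / real G"
proof (intro exI conjI)
  define j where "j = t * G div n"
  have "t * G \<le> n * G" using t by simp
  then show "j \<le> G" unfolding j_def using n by (metis div_le_mono nonzero_mult_div_cancel_left not_gr0)
  have "j * n \<le> t * G" unfolding j_def by (rule div_times_less_eq_dividend)
  then have "j * n div G \<le> t * G div G" by (rule div_le_mono)
  then show "j * n div G \<le> t" using G by simp
  have "t * G < (j + 1) * n" unfolding j_def using dividend_less_div_times[of n "t * G"] n
    by (simp add: algebra_simps)
  moreover have "j * n < G * (j * n div G) + G" using dividend_less_times_div[of G "j * n"] G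
    by (simp add: algebra_simps)
  ultimately have "t * G < G * (j * n div G) + G + n" by (simp add: algebra_simps)
  then have "real t * real G < real G * real (j * n div G) + real G + real n"
    by (metis of_nat_add of_nat_less_iff of_nat_mult)
  then show "real t - real (j * n div G) < 1 + real n / real G"
    using G by (simp add: field_simps)
qed

lemma (in unit_increments) compensated_large_at_grid_point:
  assumes xs: "xs \<in> set_pmf (markov_traj st x0 n)"
    and z: "\<zeta> > 0" and G: "real G \<ge> 4 / \<zeta>" "G > 0" and n: "real n \<ge> 4 / \<zeta>" "n > 0"
    and t: "t \<le> n" and big: "\<bar>compensated st g t xs\<bar> > \<zeta> * real n"
  shows "\<exists>j\<le>G. \<zeta> * real n / 2 \<le> \<bar>compensated st g (j * n div G) xs\<bar>"
proof -
  obtain j where j: "j \<le> G" "j * n div G \<le> t" and close: "real t - real (j * n div G) < 1 + real n / real G"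
    using exists_grid_point_below[OF G(2) n(2) t] by blast
  have "real n / real G \<le> \<zeta> * real n / 4" "1 \<le> \<zeta> * real n / 4"
    using G n z by (simp_all add: field_simps)
  moreover have "\<bar>compensated st g t xs - compensated st g (j * n div G) xs\<bar> \<le> real t - real (j * n div G)"
    using compensated_lipschitz[OF xs j(2) t] j(2) by simp
  ultimately show ?thesis
    using big close j(1) by (intro exI[of _ j]) linarith
qed

text \<open>Maximal inequality: by the Lipschitz property of compensated processes it suffices to control
  them at the \<open>G + 1\<close> grid times \<open>j n div G\<close>, where Chebyshev applies.\<close>

lemma compensated_max_prob_le:
  fixes st :: "'s \<Rightarrow> 's pmf" and g :: "nat \<Rightarrow> 's \<Rightarrow> real"
  assumes inc: "\<And>k. k \<in> {1..K} \<Longrightarrow> unit_increments st (g k)"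
    and z: "\<zeta> > 0" and G: "real G \<ge> 4 / \<zeta>" "G > 0" and n: "real n \<ge> 4 / \<zeta>" "n > 0"
  shows "measure_pmf.prob (markov_traj st x0 n)
           {xs. \<exists>t\<le>n. \<exists>k\<in>{1..K}. \<bar>compensated st (g k) t xs\<bar> > \<zeta> * real n}
         \<le> 4 * (real G + 1) * K / (\<zeta>\<^sup>2 * real n)"
proof -
  let ?P = "markov_traj st x0 n"
  define E where "E jk = {xs. \<zeta> * real n / 2 \<le> \<bar>compensated st (g (snd jk)) (fst jk * n div G) xs\<bar>}" for jk
  have nr: "real n > 0" using n by simp
  have grid_le: "j * n div G \<le> n" if "j \<le> G" for j
    using that G by (metis div_le_mono mult.commute mult_le_mono1 nonzero_mult_div_cancel_left not_gr0)
  have "AE xs in ?P. xs \<in> {xs. \<exists>t\<le>n. \<exists>k\<in>{1..K}. \<bar>compensated st (g k) t xs\<bar> > \<zeta> * real n}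
                     \<longrightarrow> xs \<in> (\<Union>jk\<in>{..G} \<times> {1..K}. E jk)"
  proof (unfold AE_measure_pmf_iff, intro ballI impI)
    fix xs assume xs: "xs \<in> set_pmf ?P"
      and "xs \<in> {xs. \<exists>t\<le>n. \<exists>k\<in>{1..K}. \<bar>compensated st (g k) t xs\<bar> > \<zeta> * real n}"
    then obtain t k where t: "t \<le> n" and k: "k \<in> {1..K}"
      and big: "\<bar>compensated st (g k) t xs\<bar> > \<zeta> * real n"
      by auto
    obtain j where "j \<le> G" "\<zeta> * real n / 2 \<le> \<bar>compensated st (g k) (j * n div G) xs\<bar>"
      using unit_increments.compensated_large_at_grid_point[OF inc[OF k] xs z G n t big] by blast
    then show "xs \<in> (\<Union>jk\<in>{..G} \<times> {1..K}. E jk)" using k unfolding E_def by force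
  qed
  then have "measure_pmf.prob ?P {xs. \<exists>t\<le>n. \<exists>k\<in>{1..K}. \<bar>compensated st (g k) t xs\<bar> > \<zeta> * real n}
        \<le> measure_pmf.prob ?P (\<Union>jk\<in>{..G} \<times> {1..K}. E jk)"
    by (intro measure_pmf.finite_measure_mono_AE) auto
  also have "\<dots> \<le> (\<Sum>jk\<in>{..G} \<times> {1..K}. measure_pmf.prob ?P (E jk))"
    by (intro measure_pmf.finite_measure_subadditive_finite) auto
  also have "\<dots> \<le> (\<Sum>jk\<in>{..G} \<times> {1..K}. real n / (\<zeta> * real n / 2)\<^sup>2)"
  proof (intro sum_mono)
    fix jk assume jk: "jk \<in> {..G} \<times> {1..K}"
    have "measure_pmf.prob ?P (E jk) \<le> real (fst jk * n div G) / (\<zeta> * real n / 2)\<^sup>2"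
      unfolding E_def using jk z nr grid_le
      by (intro unit_increments.compensated_deviation_prob_le[OF inc]) auto
    also have "\<dots> \<le> real n / (\<zeta> * real n / 2)\<^sup>2"
      using grid_le jk by (intro divide_right_mono) auto
    finally show "measure_pmf.prob ?P (E jk) \<le> real n / (\<zeta> * real n / 2)\<^sup>2" .
  qed
  also have "\<dots> = 4 * (real G + 1) * K / (\<zeta>\<^sup>2 * real n)"
    using nr z by (simp add: card_cartesian_product field_simps power2_eq_square)
  finally show ?thesis .
qed

text \<open>On the event that every compensated count stays below \<open>\<zeta> n\<close>, the deviation from the
  solution is at most \<open>K \<zeta> e\<^bsup>2cK\<^esup> + O(1/n)\<close>; choosing \<open>\<zeta>\<close> of order \<open>\<epsilon>\<close>, the maximal
  inequality bounds the probability of the complementary event by \<open>O(1/n)\<close>.\<close>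

lemma exploration_deviation_prob_le:
  fixes \<alpha> :: "real \<Rightarrow> nat \<Rightarrow> real"
  assumes c: "c > 0" and K: "K \<ge> 1" and sol: "solves_tetris_ode c K \<alpha>"
    and z: "\<zeta> > 0" and G: "real G \<ge> 4 / \<zeta>" "G > 0" and n: "real n \<ge> 2 * c" "real n \<ge> 4 / \<zeta>"
    and error: "K * \<zeta> * exp (2 * c * K) + (K * (4 * c\<^sup>2 + 2 * c * K) * exp (2 * c * K) + 1) / real n \<le> \<epsilon>"
  shows "measure_pmf.prob (expl_traj n (c / real n) K n)
           {xs. \<exists>t\<in>{0..1}. \<exists>k\<in>{1..K}. \<bar>alpha_n n xs t k - \<alpha> t k\<bar> > \<epsilon>}
         \<le> 4 * (real G + 1) * K / (\<zeta>\<^sup>2 * real n)"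
proof -
  have n0: "n > 0" using n c by (cases n) auto
  let ?Bad = "{xs. \<exists>t\<le>n. \<exists>k\<in>{1..K}. \<bar>A_compensated n c K k t xs\<bar> > \<zeta> * real n}"
  have "AE xs in expl_chain n c K.
          xs \<in> {xs. \<exists>t\<in>{0..1}. \<exists>k\<in>{1..K}. \<bar>alpha_n n xs t k - \<alpha> t k\<bar> > \<epsilon>} \<longrightarrow> xs \<in> ?Bad"
  proof (unfold AE_measure_pmf_iff, intro ballI impI, rule ccontr)
    fix xs assume xs: "xs \<in> set_pmf (expl_chain n c K)" and "xs \<notin> ?Bad"
      and "xs \<in> {xs. \<exists>t\<in>{0..1}. \<exists>k\<in>{1..K}. \<bar>alpha_n n xs t k - \<alpha> t k\<bar> > \<epsilon>}"
    then obtain t k where t: "t \<in> {0..1}" "k \<in> {1..K}" and far: "\<bar>alpha_n n xs t k - \<alpha> t k\<bar> > \<epsilon>"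
      and small: "\<And>t k. t \<le> n \<Longrightarrow> k \<in> {1..K} \<Longrightarrow> \<bar>A_compensated n c K k t xs\<bar> \<le> \<zeta> * real n"
      by (auto simp: not_less)
    show False
      using uniform_error_bound[OF c K sol n(1) xs _ small t] z error far by linarith
  qed
  then have "measure_pmf.prob (expl_traj n (c / real n) K n)
               {xs. \<exists>t\<in>{0..1}. \<exists>k\<in>{1..K}. \<bar>alpha_n n xs t k - \<alpha> t k\<bar> > \<epsilon>}
             \<le> measure_pmf.prob (expl_chain n c K) ?Bad"
    unfolding expl_traj_eq_markov_traj by (intro measure_pmf.finite_measure_mono_AE) auto
  also have "\<dots> \<le> 4 * (real G + 1) * K / (\<zeta>\<^sup>2 * real n)"
    using unit_increments_A_count[OF K] by (intro compensated_max_prob_le[OF _ z G n(2) n0])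
  finally show ?thesis .
qed

lemma exploration_fluid_limit:
  fixes \<alpha> :: "real \<Rightarrow> nat \<Rightarrow> real"
  assumes c: "c > 0" and K: "K \<ge> 1" and sol: "solves_tetris_ode c K \<alpha>" and eps: "\<epsilon> > 0"
  shows "(\<lambda>n. measure_pmf.prob (expl_traj n (c / real n) K n)
                 {xs. \<exists>t\<in>{0..1}. \<exists>k\<in>{1..K}. \<bar>alpha_n n xs t k - \<alpha> t k\<bar> > \<epsilon>}) \<longlonglongrightarrow> 0"
proof -
  define \<zeta> where "\<zeta> = \<epsilon> / (2 * K * exp (2 * c * K))"
  define G where "G = nat \<lceil>4 / \<zeta>\<rceil>"
  define C where "C = K * (4 * c\<^sup>2 + 2 * c * K) * exp (2 * c * K) + 1"
  have z: "\<zeta> > 0" and half: "K * \<zeta> * exp (2 * c * K) = \<epsilon> / 2"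
    using eps K by (simp_all add: \<zeta>_def)
  have G: "real G \<ge> 4 / \<zeta>" "G > 0"
    using z unfolding G_def by (linarith, simp)
  have large: "\<forall>\<^sub>F n in sequentially. real n \<ge> M" for M
    using filterlim_real_sequentially unfolding filterlim_at_top by blast
  have "\<forall>\<^sub>F n in sequentially. real n \<ge> 2 * c \<and> real n \<ge> 4 / \<zeta> \<and> C / real n < \<epsilon> / 2"
    using large order_tendstoD(2)[OF lim_const_over_n[of C], of "\<epsilon> / 2"] eps
    by (intro eventually_conj) auto
  then have bound: "\<forall>\<^sub>F n in sequentially. measure_pmf.prob (expl_traj n (c / real n) K n)
               {xs. \<exists>t\<in>{0..1}. \<exists>k\<in>{1..K}. \<bar>alpha_n n xs t k - \<alpha> t k\<bar> > \<epsilon>}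
             \<le> (4 * (real G + 1) * K / \<zeta>\<^sup>2) / real n"
  proof (rule eventually_mono)
    fix n assume n: "real n \<ge> 2 * c \<and> real n \<ge> 4 / \<zeta> \<and> C / real n < \<epsilon> / 2"
    then have "K * \<zeta> * exp (2 * c * K) + C / real n \<le> \<epsilon>"
      using half by linarith
    then have "measure_pmf.prob (expl_traj n (c / real n) K n)
               {xs. \<exists>t\<in>{0..1}. \<exists>k\<in>{1..K}. \<bar>alpha_n n xs t k - \<alpha> t k\<bar> > \<epsilon>}
             \<le> 4 * (real G + 1) * K / (\<zeta>\<^sup>2 * real n)"
      using n unfolding C_def by (intro exploration_deviation_prob_le[OF c K sol z G]) auto
    then show "measure_pmf.prob (expl_traj n (c / real n) K n)
               {xs. \<exists>t\<in>{0..1}. \<exists>k\<in>{1..K}. \<bar>alpha_n n xs t k - \<alpha> t k\<bar> > \<epsilon>}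
             \<le> (4 * (real G + 1) * K / \<zeta>\<^sup>2) / real n"
      by simp
  qed
  show ?thesis
    by (rule tendsto_sandwich[OF _ bound tendsto_const lim_const_over_n]) simp
qed

section \<open>The Tetris model as an exploration\<close>

text \<open>Unexplored vertices are read as height \<open>0\<close>, which is also the initial height in the Tetris model.\<close>

definition heights :: "expl_state \<Rightarrow> nat \<Rightarrow> nat" where
  "heights h v = (case h v of None \<Rightarrow> 0 | Some j \<Rightarrow> j)"

definition edge_key :: "nat \<Rightarrow> nat \<Rightarrow> nat \<times> nat" where
  "edge_key x w = (min x w, max x w)"

definition edges_touching :: "nat \<Rightarrow> nat set \<Rightarrow> (nat \<times> nat) set" where
  "edges_touching n R = {(i, j). i < j \<and> j < n \<and> (i \<in> R \<or> j \<in> R)}"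

definition edges_from :: "nat \<Rightarrow> nat set \<Rightarrow> nat \<Rightarrow> (nat \<times> nat) set" where
  "edges_from n R x = edge_key x ` ({..<n} - R)"

definition tetris_on :: "nat \<Rightarrow> real \<Rightarrow> nat \<Rightarrow> nat set \<Rightarrow> (nat \<Rightarrow> nat) \<Rightarrow> (nat \<Rightarrow> nat) pmf" where
  "tetris_on n p K R s =
     do { E \<leftarrow> Pi_pmf (edges_touching n R) False (\<lambda>_. bernoulli_pmf p);
          ord \<leftarrow> pmf_of_set (permutations_of_set R);
          return_pmf (foldl (tetris_update n K E) s ord) }"

lemma finite_edges_touching [simp]: "finite (edges_touching n R)"
  by (rule finite_subset[of _ "{..<n} \<times> {..<n}"]) (auto simp: edges_touching_def)

lemma finite_edges_from [simp]: "finite (edges_from n R x)"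
  unfolding edges_from_def by simp

lemma edge_key_inj: "edge_key x w = edge_key x w' \<Longrightarrow> w = w'"
  unfolding edge_key_def by (simp add: min_def max_def split: if_splits)

lemma edges_touching_split:
  assumes "x \<in> R" "R \<subseteq> {..<n}"
  shows "edges_touching n R = edges_from n R x \<union> edges_touching n (R - {x})"
    and "edges_from n R x \<inter> edges_touching n (R - {x}) = {}"
proof -
  show "edges_from n R x \<inter> edges_touching n (R - {x}) = {}"
    using assms unfolding edges_from_def edges_touching_def edge_key_def
    by (auto simp: min_def max_def split: if_splits)
  have "(i, j) \<in> edges_from n R x" if "i < j" "j < n" "i \<in> R \<or> j \<in> R" "i \<notin> R - {x}" "j \<notin> R - {x}" for i j
  proof -
    have "(i = x \<and> j \<notin> R) \<or> (j = x \<and> i \<notin> R)" using that by auto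
    then show ?thesis
    proof
      assume "i = x \<and> j \<notin> R"
      then have "(i, j) = edge_key x j" "j \<in> {..<n} - R" using that by (auto simp: edge_key_def)
      then show ?thesis unfolding edges_from_def by blast
    next
      assume "j = x \<and> i \<notin> R"
      then have "(i, j) = edge_key x i" "i \<in> {..<n} - R" using that by (auto simp: edge_key_def)
      then show ?thesis unfolding edges_from_def by blast
    qed
  qed
  moreover have "(min x w, max x w) \<in> edges_touching n R" if "w < n" "w \<notin> R" for w
  proof -
    have "x \<noteq> w" using that assms(1) by auto
    then show ?thesis using that assms unfolding edges_touching_def by (auto simp: min_def max_def)
  qed
  ultimately show "edges_touching n R = edges_from n R x \<union> edges_touching n (R - {x})"
    unfolding edges_touching_def edges_from_def edge_key_def by auto
qed

lemma edge_key_notin_edges_from: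
  assumes "u \<in> R" "u \<noteq> x" "x \<in> R"
  shows "edge_key u w \<notin> edges_from n R x"
proof
  assume "edge_key u w \<in> edges_from n R x"
  then obtain w' where w': "w' \<notin> R" "edge_key u w = edge_key x w'" unfolding edges_from_def by auto
  then have "{u, w} = {x, w'}" unfolding edge_key_def by (auto simp: min_def max_def split: if_splits)
  then show False using assms w' by (metis doubleton_eq_iff)
qed

lemma bij_betw_edge_key:
  assumes "unexplored n h = R"
  shows "bij_betw (edge_key x) (explored n h) (edges_from n R x)"
    and "\<And>w. w \<notin> explored n h \<Longrightarrow> edge_key x w \<notin> edges_from n R x"
proof -
  have E: "explored n h = {..<n} - R"
    using assms unfolding explored_def unexplored_def by auto
  have "inj_on (edge_key x) A" for A unfolding inj_on_def using edge_key_inj by blast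
  then show "bij_betw (edge_key x) (explored n h) (edges_from n R x)"
    unfolding bij_betw_def edges_from_def E by simp
  show "edge_key x w \<notin> edges_from n R x" if "w \<notin> explored n h" for w
    using that edge_key_inj unfolding edges_from_def E by blast
qed

lemma new_height_pmf_eq_edges_from:
  assumes "unexplored n h = R"
  shows "new_height_pmf n p K h =
    map_pmf (\<lambda>E. next_height K (max_joined_height n h (\<lambda>w. E (edge_key x w))))
            (Pi_pmf (edges_from n R x) False (\<lambda>_. bernoulli_pmf p))"
proof -
  have "join_pmf n p h = map_pmf (\<lambda>E. E \<circ> edge_key x) (Pi_pmf (edges_from n R x) False (\<lambda>_. bernoulli_pmf p))"
    unfolding join_pmf_def by (rule Pi_pmf_bij_betw[OF _ bij_betw_edge_key[OF assms]]) simp_all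
  then show ?thesis unfolding new_height_pmf_def by (simp add: pmf.map_comp o_def)
qed

lemma max_joined_height_cong:
  "(\<And>w. w \<in> explored n h \<Longrightarrow> J w = J' w) \<Longrightarrow> max_joined_height n h J = max_joined_height n h J'"
  unfolding max_joined_height_def by (metis (no_types, lifting))

lemma foldl_tetris_update_cong:
  assumes "\<And>u w. u \<in> set xs \<Longrightarrow> E (edge_key u w) = E' (edge_key u w)"
  shows "foldl (tetris_update n K E) s xs = foldl (tetris_update n K E') s xs"
  using assms
proof (induction xs arbitrary: s)
  case (Cons u xs)
  have "tetris_update n K E s u = tetris_update n K E' s u"
    using Cons.prems unfolding tetris_update_def adj_def edge_key_def by simp
  then show ?case using Cons by simp
qed simp

text \<open>Processing an unexplored vertex in the Tetris model is the exploration step with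
  \<open>J w = E (edge_key x w)\<close>: among the neighbours only explored ones have nonzero height.\<close>

lemma tetris_update_heights:
  assumes K: "K \<ge> 1" and x: "x \<in> unexplored n h"
  shows "tetris_update n K E (heights h) x =
         heights (h(x := Some (next_height K (max_joined_height n h (\<lambda>w. E (edge_key x w))))))"
proof -
  have xn: "x < n" "h x = None" using x by (auto simp: unexplored_def)
  have neighbours: "insert 0 {heights h w | w. w < n \<and> adj E x w} =
        insert 0 {k. \<exists>w\<in>explored n h. E (edge_key x w) \<and> h w = Some k}"
  proof (intro equalityI subsetI)
    fix k assume "k \<in> insert 0 {heights h w | w. w < n \<and> adj E x w}"
    then consider "k = 0" | w where "w < n" "adj E x w" "k = heights h w" by auto
    then show "k \<in> insert 0 {k. \<exists>w\<in>explored n h. E (edge_key x w) \<and> h w = Some k}"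
    proof cases
      case 2
      then show ?thesis
        by (cases "h w") (auto simp: heights_def explored_def adj_def edge_key_def)
    qed simp
  next
    fix k assume "k \<in> insert 0 {k. \<exists>w\<in>explored n h. E (edge_key x w) \<and> h w = Some k}"
    then consider "k = 0" | w where "w \<in> explored n h" "E (edge_key x w)" "h w = Some k" by auto
    then show "k \<in> insert 0 {heights h w | w. w < n \<and> adj E x w}"
    proof cases
      case 2
      then have "w \<noteq> x" using xn by auto
      then have "w < n \<and> adj E x w" using 2 by (auto simp: explored_def adj_def edge_key_def)
      moreover have "heights h w = k" using 2 by (simp add: heights_def)
      ultimately show ?thesis by blast
    qed simp
  qed
  have next_height: "(if M < K then M + 1 else 0) = next_height K M" for M
    using K by (auto simp: next_height_def)
  have heights_upd: "heights (h(x := Some j)) = (heights h)(x := j)" for j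
    by (simp add: heights_def fun_eq_iff)
  show ?thesis
    unfolding tetris_update_def max_joined_height_def Let_def neighbours next_height heights_upd ..
qed

text \<open>Conditioning on the first vertex \<open>x\<close> of the random order: the edges at \<open>x\<close> that lead to
  explored vertices decide its height exactly as in the exploration, and are not looked at again.\<close>

lemma tetris_on_first_vertex:
  assumes K: "K \<ge> 1" and x: "x \<in> R" and R: "R \<subseteq> {..<n}" and U: "unexplored n h = R"
  shows "do { E \<leftarrow> Pi_pmf (edges_touching n R) False (\<lambda>_. bernoulli_pmf p);
              xs \<leftarrow> pmf_of_set (permutations_of_set (R - {x}));
              return_pmf (foldl (tetris_update n K E) (tetris_update n K E (heights h) x) xs) }
       = do { y \<leftarrow> new_height_pmf n p K h; tetris_on n p K (R - {x}) (heights (h(x := Some y))) }"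
proof -
  let ?B = "\<lambda>_::nat \<times> nat. bernoulli_pmf p"
  let ?T1 = "edges_from n R x" and ?T2 = "edges_touching n (R - {x})"
  let ?f = "tetris_update n K"
  define merge where "merge = (\<lambda>(E1 :: nat \<times> nat \<Rightarrow> bool, E2 :: nat \<times> nat \<Rightarrow> bool) e. if e \<in> ?T1 then E1 e else E2 e)"
  have finR: "finite R" using R finite_subset by blast
  have split: "Pi_pmf (edges_touching n R) False ?B = map_pmf merge (pair_pmf (Pi_pmf ?T1 False ?B) (Pi_pmf ?T2 False ?B))"
    unfolding edges_touching_split(1)[OF x R] merge_def
    by (rule Pi_pmf_union) (use edges_touching_split(2)[OF x R] in auto)
  have first: "?f (merge (E1, E2)) (heights h) x =
               heights (h(x := Some (next_height K (max_joined_height n h (\<lambda>w. E1 (edge_key x w))))))" for E1 E2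
  proof -
    have "max_joined_height n h (\<lambda>w. merge (E1, E2) (edge_key x w)) = max_joined_height n h (\<lambda>w. E1 (edge_key x w))"
      using bij_betw_apply[OF bij_betw_edge_key(1)[OF U]] by (intro max_joined_height_cong) (auto simp: merge_def)
    then show ?thesis using tetris_update_heights[OF K, of x n h] x U by simp
  qed
  have rest: "foldl (?f (merge (E1, E2))) s xs = foldl (?f E2) s xs"
    if "xs \<in> set_pmf (pmf_of_set (permutations_of_set (R - {x})))" for E1 E2 s xs
  proof (rule foldl_tetris_update_cong)
    fix u w assume "u \<in> set xs"
    moreover have "set xs = R - {x}"
      using that finR by (auto dest: permutations_of_setD)
    ultimately show "merge (E1, E2) (edge_key u w) = E2 (edge_key u w)"
      using edge_key_notin_edges_from[OF _ _ x] unfolding merge_def by auto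
  qed
  have "do { E \<leftarrow> Pi_pmf (edges_touching n R) False ?B; xs \<leftarrow> pmf_of_set (permutations_of_set (R - {x}));
             return_pmf (foldl (?f E) (?f E (heights h) x) xs) }
      = do { E1 \<leftarrow> Pi_pmf ?T1 False ?B; E2 \<leftarrow> Pi_pmf ?T2 False ?B; xs \<leftarrow> pmf_of_set (permutations_of_set (R - {x}));
             return_pmf (foldl (?f (merge (E1, E2))) (?f (merge (E1, E2)) (heights h) x) xs) }"
    unfolding split by (simp add: pair_pmf_def bind_map_pmf bind_assoc_pmf bind_return_pmf)
  also have "\<dots> = do { E1 \<leftarrow> Pi_pmf ?T1 False ?B;
        tetris_on n p K (R - {x}) (heights (h(x := Some (next_height K (max_joined_height n h (\<lambda>w. E1 (edge_key x w))))))) }"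
    unfolding tetris_on_def by (intro bind_pmf_cong refl) (simp add: first rest)
  also have "\<dots> = do { y \<leftarrow> new_height_pmf n p K h; tetris_on n p K (R - {x}) (heights (h(x := Some y))) }"
    by (simp add: new_height_pmf_eq_edges_from[OF U, of p K x] bind_map_pmf)
  finally show ?thesis .
qed

lemma tetris_on_eq_kernel_iter:
  assumes K: "K \<ge> 1"
  shows "card R = m \<Longrightarrow> R \<subseteq> {..<n} \<Longrightarrow> unexplored n h = R \<Longrightarrow>
         tetris_on n p K R (heights h) = map_pmf heights (kernel_iter (expl_step n p K) m h)"
proof (induction m arbitrary: R h)
  case 0
  then have "R = {}" using finite_subset by auto
  moreover have "edges_touching n {} = {}" unfolding edges_touching_def by simp
  ultimately show ?case
    by (simp add: tetris_on_def bind_return_pmf map_pmf_def pmf_of_set_singleton)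
next
  case (Suc m)
  have finR: "finite R" using Suc.prems(2) finite_subset by blast
  have R: "R \<noteq> {}" using Suc.prems(1) by auto
  have IH: "tetris_on n p K (R - {x}) (heights (h(x := Some y))) =
            map_pmf heights (kernel_iter (expl_step n p K) m (h(x := Some y)))" if "x \<in> R" for x y
  proof (rule Suc.IH)
    show "card (R - {x}) = m" "R - {x} \<subseteq> {..<n}"
      using Suc.prems(1,2) that finR by auto
    show "unexplored n (h(x := Some y)) = R - {x}"
      unfolding unexplored_fun_upd Suc.prems(3) ..
  qed
  have "tetris_on n p K R (heights h) =
        do { x \<leftarrow> pmf_of_set R; E \<leftarrow> Pi_pmf (edges_touching n R) False (\<lambda>_. bernoulli_pmf p);
             xs \<leftarrow> pmf_of_set (permutations_of_set (R - {x}));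
             return_pmf (foldl (tetris_update n K E) (tetris_update n K E (heights h) x) xs) }"
    unfolding tetris_on_def
    by (simp add: random_permutation_of_set[OF finR R] bind_assoc_pmf bind_return_pmf bind_commute_pmf[of "pmf_of_set R"])
  also have "\<dots> = do { x \<leftarrow> pmf_of_set R; y \<leftarrow> new_height_pmf n p K h;
                       map_pmf heights (kernel_iter (expl_step n p K) m (h(x := Some y))) }"
    using finR R Suc.prems(2,3)
    by (intro bind_pmf_cong refl) (simp add: tetris_on_first_vertex[OF K] IH)
  also have "\<dots> = map_pmf heights (kernel_iter (expl_step n p K) (Suc m) h)"
    using Suc.prems(3) R by (simp add: expl_step_eq map_bind_pmf bind_assoc_pmf bind_return_pmf)
  finally show ?case .
qed

lemma tetris_pmf_eq_expl_traj:
  assumes K: "K \<ge> 1"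
  shows "tetris_pmf n p K = map_pmf (heights \<circ> last) (expl_traj n p K n)"
proof -
  have "edges_touching n {..<n} = {(i, j). i < j \<and> j < n}"
    unfolding edges_touching_def by auto
  moreover have "unexplored n expl_init = {..<n}" by (auto simp: unexplored_def expl_init_def)
  moreover have "heights expl_init = (\<lambda>_. 0)" by (simp add: heights_def expl_init_def fun_eq_iff)
  ultimately have "tetris_pmf n p K = map_pmf heights (kernel_iter (expl_step n p K) n expl_init)"
    using tetris_on_eq_kernel_iter[OF K, of "{..<n}" n n expl_init p]
    unfolding tetris_pmf_def gnp_def tetris_final_def tetris_on_def by (simp add: atLeast0LessThan)
  also have "\<dots> = map_pmf (heights \<circ> last) (expl_traj n p K n)"
    by (simp add: expl_traj_eq_markov_traj map_last_markov_traj[symmetric] pmf.map_comp)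
  finally show ?thesis .
qed

lemma N_count_heights: "k \<ge> 1 \<Longrightarrow> N_count n (heights h) k = A_count n h k"
  unfolding N_count_def A_count_def heights_def
  by (rule arg_cong[where f = card]) (auto split: option.splits)

section \<open>Weak convergence of the final counts\<close>

lemma cdf_return: "cdf (return borel a) y = (if a \<le> y then 1 else 0)"
  unfolding cdf_def2 by (subst measure_return) auto

lemma not_isCont_cdf_return: "\<not> isCont (cdf (return borel (a::real))) a"
proof
  assume "isCont (cdf (return borel a)) a"
  moreover have "(\<lambda>m. a - inverse (real (Suc m))) \<longlonglongrightarrow> a"
    using tendsto_diff[OF tendsto_const LIMSEQ_inverse_real_of_nat, of a] by simp
  ultimately have "(\<lambda>m. cdf (return borel a) (a - inverse (real (Suc m)))) \<longlonglongrightarrow> cdf (return borel a) a"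
    by (rule isCont_tendsto_compose)
  then have "(\<lambda>m. 0::real) \<longlonglongrightarrow> 1" by (simp add: cdf_return)
  then show False using LIMSEQ_unique[OF tendsto_const] by fastforce
qed

context
  fixes X :: "nat \<Rightarrow> 'a \<Rightarrow> real" and P :: "nat \<Rightarrow> 'a pmf" and a :: real
  assumes conv: "\<And>\<epsilon>. \<epsilon> > 0 \<Longrightarrow> (\<lambda>n. measure_pmf.prob (P n) {x. \<bar>X n x - a\<bar> > \<epsilon>}) \<longlonglongrightarrow> 0"
begin

lemma prob_le_tendsto_0_below:
  assumes x: "x < a"
  shows "(\<lambda>n. measure_pmf.prob (P n) {y. X n y \<le> x}) \<longlonglongrightarrow> 0"
proof (rule tendsto_sandwich[OF _ _ tendsto_const conv])
  show "(a - x) / 2 > 0" using x by simp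
  have "measure_pmf.prob (P n) {y. X n y \<le> x} \<le> measure_pmf.prob (P n) {y. \<bar>X n y - a\<bar> > (a - x) / 2}" for n
    using x by (intro measure_pmf.finite_measure_mono) auto
  then show "\<forall>\<^sub>F n in sequentially. measure_pmf.prob (P n) {y. X n y \<le> x}
               \<le> measure_pmf.prob (P n) {y. \<bar>X n y - a\<bar> > (a - x) / 2}"
    by simp
qed simp

lemma prob_le_tendsto_1_above:
  assumes x: "x > a"
  shows "(\<lambda>n. measure_pmf.prob (P n) {y. X n y \<le> x}) \<longlonglongrightarrow> 1"
proof (rule tendsto_sandwich[OF _ _ _ tendsto_const])
  have "(\<lambda>n. 1 - measure_pmf.prob (P n) {y. \<bar>X n y - a\<bar> > (x - a) / 2}) \<longlonglongrightarrow> 1 - 0"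
    using x by (intro tendsto_diff tendsto_const conv) simp
  then show "(\<lambda>n. 1 - measure_pmf.prob (P n) {y. \<bar>X n y - a\<bar> > (x - a) / 2}) \<longlonglongrightarrow> 1"
    by simp
  have "1 - measure_pmf.prob (P n) {y. \<bar>X n y - a\<bar> > (x - a) / 2} \<le> measure_pmf.prob (P n) {y. X n y \<le> x}" for n
  proof -
    have "measure_pmf.prob (P n) {y. \<not> X n y \<le> x} \<le> measure_pmf.prob (P n) {y. \<bar>X n y - a\<bar> > (x - a) / 2}"
      using x by (intro measure_pmf.finite_measure_mono) auto
    moreover have "measure_pmf.prob (P n) {y. X n y \<le> x} = 1 - measure_pmf.prob (P n) {y. \<not> X n y \<le> x}"
      using measure_pmf.prob_compl[of "{y. \<not> X n y \<le> x}" "P n"] by (simp add: Compl_eq_Diff_UNIV[symmetric] Collect_neg_eq[symmetric])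
    ultimately show ?thesis by linarith
  qed
  then show "\<forall>\<^sub>F n in sequentially. 1 - measure_pmf.prob (P n) {y. \<bar>X n y - a\<bar> > (x - a) / 2}
               \<le> measure_pmf.prob (P n) {y. X n y \<le> x}"
    by simp
qed simp

lemma weak_conv_return_if_tendsto_in_prob:
  "weak_conv_m (\<lambda>n. distr (measure_pmf (P n)) borel (X n)) (return borel a)"
  unfolding weak_conv_m_def weak_conv_def
proof (intro allI impI)
  fix x :: real
  assume cont: "isCont (cdf (return borel a)) x"
  have cdf_eq: "cdf (distr (measure_pmf (P n)) borel (X n)) x = measure_pmf.prob (P n) {y. X n y \<le> x}" for n
    unfolding cdf_def2 by (subst measure_distr) (auto simp: vimage_def)
  consider "x < a" | "x = a" | "x > a" by linarith
  then show "(\<lambda>n. cdf (distr (measure_pmf (P n)) borel (X n)) x) \<longlonglongrightarrow> cdf (return borel a) x"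
  proof cases
    case 1 then show ?thesis using prob_le_tendsto_0_below[OF 1] by (simp add: cdf_eq cdf_return)
  next
    case 2 then show ?thesis using not_isCont_cdf_return cont by simp
  next
    case 3 then show ?thesis using prob_le_tendsto_1_above[OF 3] by (simp add: cdf_eq cdf_return)
  qed
qed

end

lemma final_count_deviation_le:
  assumes K: "K \<ge> 1" and k: "k \<in> {1..K}"
  shows "measure_pmf.prob (tetris_pmf n (c / real n) K) {h. \<bar>real (N_count n h k) / real n - \<alpha> 1 k\<bar> > \<epsilon>}
      \<le> measure_pmf.prob (expl_traj n (c / real n) K n)
           {xs. \<exists>t\<in>{0..1}. \<exists>k\<in>{1..K}. \<bar>alpha_n n xs t k - \<alpha> t k\<bar> > \<epsilon>}"
proof -
  have "measure_pmf.prob (tetris_pmf n (c / real n) K) {h. \<bar>real (N_count n h k) / real n - \<alpha> 1 k\<bar> > \<epsilon>}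
      = measure_pmf.prob (expl_traj n (c / real n) K n) {xs. \<bar>alpha_n n xs 1 k - \<alpha> 1 k\<bar> > \<epsilon>}"
  proof -
    have "alpha_n n xs 1 k = real (A_count n (last xs) k) / real n"
      if "xs \<in> set_pmf (expl_traj n (c / real n) K n)" for xs
      using last_markov_traj[OF that[unfolded expl_traj_eq_markov_traj]] by (simp add: alpha_n_def)
    then show ?thesis
      unfolding tetris_pmf_eq_expl_traj[OF K] using k
      by (simp add: vimage_def N_count_heights, intro measure_pmf.finite_measure_eq_AE)
         (auto simp: AE_measure_pmf_iff)
  qed
  also have "\<dots> \<le> measure_pmf.prob (expl_traj n (c / real n) K n)
           {xs. \<exists>t\<in>{0..1}. \<exists>k\<in>{1..K}. \<bar>alpha_n n xs t k - \<alpha> t k\<bar> > \<epsilon>}"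
    using k by (intro measure_pmf.finite_measure_mono) (auto intro!: bexI[where x = "1::real"])
  finally show ?thesis .
qed

theorem theorem2:
  fixes c :: real and K :: nat
  assumes "c > 0" and "K \<ge> 1"
  shows "\<exists>\<alpha> :: real \<Rightarrow> nat \<Rightarrow> real.
           solves_tetris_ode c K \<alpha>
         \<and> (\<forall>\<beta>. solves_tetris_ode c K \<beta> \<longrightarrow> (\<forall>t\<in>{0..1}. \<forall>k\<in>{1..K}. \<beta> t k = \<alpha> t k))
         \<and> (\<forall>\<epsilon>>0. (\<lambda>n. measure_pmf.prob (expl_traj n (c / real n) K n)
                 {xs. \<exists>t\<in>{0..1}. \<exists>k\<in>{1..K}. \<bar>alpha_n n xs t k - \<alpha> t k\<bar> > \<epsilon>})
               \<longlonglongrightarrow> 0)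
         \<and> (\<forall>k\<in>{1..K}. weak_conv_m
               (\<lambda>n. distr (measure_pmf (tetris_pmf n (c / real n) K)) borel
                       (\<lambda>h. real (N_count n h k) / real n))
               (return borel (\<alpha> 1 k)))"
proof (intro exI conjI allI impI ballI)
  let ?\<alpha> = "tetris_ode_solution c K"
  have sol: "solves_tetris_ode c K ?\<alpha>"
    by (rule tetris_ode_solution_solves[OF assms(1)])
  then show "solves_tetris_ode c K ?\<alpha>" .
  show "\<beta> t k = ?\<alpha> t k" if "solves_tetris_ode c K \<beta>" "t \<in> {0..1}" "k \<in> {1..K}" for \<beta> t k
    by (rule solution_unique[OF assms(1) sol that])
  show "(\<lambda>n. measure_pmf.prob (expl_traj n (c / real n) K n)
           {xs. \<exists>t\<in>{0..1}. \<exists>k\<in>{1..K}. \<bar>alpha_n n xs t k - ?\<alpha> t k\<bar> > \<epsilon>}) \<longlonglongrightarrow> 0"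
    if "\<epsilon> > 0" for \<epsilon>
    by (rule exploration_fluid_limit[OF assms sol that])
  show "weak_conv_m (\<lambda>n. distr (measure_pmf (tetris_pmf n (c / real n) K)) borel
          (\<lambda>h. real (N_count n h k) / real n)) (return borel (?\<alpha> 1 k))"
    if "k \<in> {1..K}" for k
  proof (rule weak_conv_return_if_tendsto_in_prob)
    show "(\<lambda>n. measure_pmf.prob (tetris_pmf n (c / real n) K)
            {h. \<bar>real (N_count n h k) / real n - ?\<alpha> 1 k\<bar> > \<epsilon>}) \<longlonglongrightarrow> 0" if "\<epsilon> > 0" for \<epsilon>
      using final_count_deviation_le[OF assms(2) \<open>k \<in> {1..K}\<close>]
      by (intro tendsto_sandwich[OF _ _ tendsto_const exploration_fluid_limit[OF assms sol that]]) auto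
  qed
qed

end
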